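(* Let $\mathbb{F}$ be a field and $\mu$ a partition of $n$. The Demazure operators $\pi_1,\dots,\pi_{n-1}$ preserve the ideal $I_\mu\subseteq\mathbb{F}[x_1,\dots,x_n]$ (i.e. $\pi_i(I_\mu)\subseteq I_\mu$ for all $i$) if and only if $\mu$ is a hook.
   Context: Demazure operators: $\pi_if=\frac{x_if-x_{i+1}s_i(f)}{x_i-x_{i+1}}$, where $s_i$ swaps $x_i,x_{i+1}$. Write partitions of $n$ increasingly with $n$ parts, $\mu=(0\le\mu_1\le\dots\le\mu_n)$, and let $\mu'=(0\le\mu'_1\le\dots\le\mu'_n)$ be the conjugate partition. Put $d_k(\mu)=\mu'_1+\dots+\mu'_k$ for $k=1,\dots,n$. The (Tanisaki) ideal $I_\mu$ is generated by all $e_r(S)$ with $S\subseteq\{x_1,\dots,x_n\}$, $|S|=k$, and $k\ge r>k-d_k(\mu)$, where $e_r(S)$ is the $r$-th elementary symmetric polynomial in the variables of $S$. $\mu$ is a hook if it has the form $(0^{n-h},1^{h-1},n-h+1)$. *)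

theory Defs
  imports "HOL-Library.Poly_Mapping"
begin

text \<open>Multivariate polynomials over a coefficient ring 'a: finitely supported maps
  from monomials.
  Variable x_k is indexed by k; we use the variables x_1, ..., x_n.\<close>

type_synonym 'a mpoly = "(nat \<Rightarrow>\<^sub>0 nat) \<Rightarrow>\<^sub>0 'a"

definition var :: "nat \<Rightarrow> 'a::comm_ring_1 mpoly" where
  "var k = Poly_Mapping.single (Poly_Mapping.single k 1) 1"

definition polys_in :: "nat \<Rightarrow> 'a::comm_ring_1 mpoly set" where
  "polys_in n = {p. \<forall>m \<in> Poly_Mapping.keys p. Poly_Mapping.keys m \<subseteq> {1..n}}"

definition swap_idx :: "nat \<Rightarrow> nat \<Rightarrow> nat \<Rightarrow> nat" where
  "swap_idx i j k = (if k = i then j else if k = j then i else k)"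

definition swap_var :: "nat \<Rightarrow> 'a::comm_ring_1 mpoly \<Rightarrow> 'a mpoly" where
  "swap_var i f = Poly_Mapping.map_key (\<lambda>m. Poly_Mapping.map_key (swap_idx i (i+1)) m) f"

definition demazure :: "nat \<Rightarrow> 'a::field mpoly \<Rightarrow> 'a mpoly" where
  "demazure i f = (THE g. (var i - var (i+1)) * g = var i * f - var (i+1) * swap_var i f)"

definition esym :: "nat \<Rightarrow> nat set \<Rightarrow> 'a::comm_ring_1 mpoly" where
  "esym r S = (\<Sum>T \<in> {T. T \<subseteq> S \<and> card T = r}. \<Prod>k\<in>T. var k)"

text \<open>Partitions of n with n parts, written increasingly: mu ! (i-1) = mu_i.\<close>
definition is_partition :: "nat \<Rightarrow> nat list \<Rightarrow> bool" where
  "is_partition n mu \<longleftrightarrow> length mu = n \<and> sorted mu \<and> sum_list mu = n"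

text \<open>Conjugate partition, written increasingly with n parts: mu'_k = #{i. mu_i \<ge> n+1-k}.\<close>
definition conj_part :: "nat \<Rightarrow> nat list \<Rightarrow> nat \<Rightarrow> nat" where
  "conj_part n mu k = card {i \<in> {1..n}. mu ! (i - 1) \<ge> n + 1 - k}"

definition dk :: "nat \<Rightarrow> nat list \<Rightarrow> nat \<Rightarrow> nat" where
  "dk n mu k = (\<Sum>j = 1..k. conj_part n mu j)"

definition tanisaki_gens :: "nat \<Rightarrow> nat list \<Rightarrow> 'a::comm_ring_1 mpoly set" where
  "tanisaki_gens n mu = {esym r S | r S. S \<subseteq> {1..n} \<and> 1 \<le> card S \<and>
      r \<le> card S \<and> card S < r + dk n mu (card S)}"

definition ideal_in :: "nat \<Rightarrow> 'a::comm_ring_1 mpoly set \<Rightarrow> 'a mpoly set" where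
  "ideal_in n G = {(\<Sum>g\<in>H. c g * g) | H c. finite H \<and> H \<subseteq> G \<and> (\<forall>g\<in>H. c g \<in> polys_in n)}"

definition tanisaki_ideal :: "nat \<Rightarrow> nat list \<Rightarrow> 'a::comm_ring_1 mpoly set" where
  "tanisaki_ideal n mu = ideal_in n (tanisaki_gens n mu)"

definition is_hook :: "nat \<Rightarrow> nat list \<Rightarrow> bool" where
  "is_hook n mu \<longleftrightarrow> (\<exists>h. 1 \<le> h \<and> h \<le> n \<and>
      mu = replicate (n - h) 0 @ replicate (h - 1) 1 @ [n - h + 1])"

end

theory Submission
  imports Defs
begin

text \<open>
  Write \<open>\<pi>\<^sub>i f = f + x\<^sub>i\<^sub>+\<^sub>1 \<partial>\<^sub>i f\<close> with the divided difference
  \<open>\<partial>\<^sub>i f = (f - s\<^sub>i f) / (x\<^sub>i - x\<^sub>i\<^sub>+\<^sub>1)\<close>, which satisfies the twisted Leibniz rule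
  \<open>\<partial>\<^sub>i (c g) = c \<partial>\<^sub>i g + s\<^sub>i(g) \<partial>\<^sub>i c\<close>. Hence \<open>\<pi>\<^sub>i\<close> preserves \<open>I\<^sub>\<mu>\<close> as soon as
  \<open>x\<^sub>i\<^sub>+\<^sub>1 \<partial>\<^sub>i g \<in> I\<^sub>\<mu>\<close> for every generator \<open>g = e\<^sub>r(S)\<close>. For such \<open>g\<close> this product is
  \<open>0\<close> or \<open>\<plusminus>(e\<^sub>r(A \<union> {i+1}) - e\<^sub>r(A))\<close> with \<open>A = S - {i, i+1}\<close>. For a hook all conjugate
  parts \<open>\<mu>'\<^sub>k\<close> with \<open>k < n\<close> are at most 1, so \<open>d\<^sub>k\<close> grows by at most one per step and
  \<open>e\<^sub>r(A)\<close> is again in \<open>I\<^sub>\<mu>\<close>.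

  For a non-hook, let \<open>l = \<mu>'\<^sub>n\<close> be the number of nonzero parts; then \<open>2 \<le> l \<le> n - 2\<close>.
  The generator \<open>e\<^sub>l\<close> of the variables other than \<open>x\<^sub>2\<close> is mapped by \<open>\<pi>\<^sub>2\<close> to \<open>e\<^sub>l\<close> of
  the variables other than \<open>x\<^sub>2, x\<^sub>3\<close>. The linear functional taking the constant term of
  \<open>\<partial>\<^sub>1 \<partial>\<^sub>l\<^sub>+\<^sub>1 \<cdots> \<partial>\<^sub>4 \<partial>\<^sub>3 f\<close> vanishes on \<open>I\<^sub>\<mu>\<close>, but takes the value \<open>\<plusminus>1\<close> on the
  latter polynomial, whose only contributing monomial is \<open>x\<^sub>1 x\<^sub>4 \<cdots> x\<^sub>l\<^sub>+\<^sub>2\<close>.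
\<close>

abbreviation lookup :: "('a \<Rightarrow>\<^sub>0 'b::zero) \<Rightarrow> 'a \<Rightarrow> 'b" where
  "lookup \<equiv> Poly_Mapping.lookup"

abbreviation keys :: "('a \<Rightarrow>\<^sub>0 'b::zero) \<Rightarrow> 'a set" where
  "keys \<equiv> Poly_Mapping.keys"

abbreviation single :: "'a \<Rightarrow> 'b::zero \<Rightarrow> 'a \<Rightarrow>\<^sub>0 'b" where
  "single \<equiv> Poly_Mapping.single"

definition monom :: "(nat \<Rightarrow>\<^sub>0 nat) \<Rightarrow> 'a::comm_ring_1 mpoly" where
  "monom m = single m 1"

lemma var_eq_monom: "var k = monom (single k 1)" by (simp add: var_def monom_def)

lemma monom_mult: "monom a * monom b = (monom (a + b) :: 'a::comm_ring_1 mpoly)"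
  by (simp add: monom_def mult_single)

lemma monom_0: "monom 0 = (1 :: 'a::comm_ring_1 mpoly)"
  by (simp add: monom_def)

lemma var_power: "(var k :: 'a::comm_ring_1 mpoly) ^ p = monom (single k p)"
proof (induction p)
  case 0 then show ?case by (simp add: monom_0)
next
  case (Suc p) then show ?case
    by (simp add: var_eq_monom monom_mult single_add[symmetric] add.commute)
qed

lemma poly_mapping_sum_single: "p = (\<Sum>m\<in>keys p. single m (lookup p m))"
  by (rule poly_mapping_eqI) (simp add: lookup_sum lookup_single when_def in_keys_iff sum.delta' split: if_splits)

lemma swap_idx_invol [simp]: "swap_idx i j (swap_idx i j k) = k"
  by (simp add: swap_idx_def)

lemma swap_idx_Suc [simp]: "swap_idx i (Suc i) i = Suc i" "swap_idx i (Suc i) (Suc i) = i"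
  by (simp_all add: swap_idx_def)

lemma inj_swap_idx: "inj (swap_idx i j)"
  by (metis injI swap_idx_invol)

definition swap_exps :: "nat \<Rightarrow> (nat \<Rightarrow>\<^sub>0 nat) \<Rightarrow> (nat \<Rightarrow>\<^sub>0 nat)" where
  "swap_exps i m = Poly_Mapping.map_key (swap_idx i (i+1)) m"

lemma lookup_swap_exps: "lookup (swap_exps i m) k = lookup m (swap_idx i (i+1) k)"
  by (simp add: swap_exps_def map_key.rep_eq[OF inj_swap_idx])

lemma swap_exps_swap_exps [simp]: "swap_exps i (swap_exps i m) = m"
  by (rule poly_mapping_eqI) (simp add: lookup_swap_exps)

lemma inj_swap_exps: "inj (swap_exps i)"
  by (metis injI swap_exps_swap_exps)

lemma swap_exps_add: "swap_exps i (a + b) = swap_exps i a + swap_exps i b"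
  by (rule poly_mapping_eqI) (simp add: lookup_swap_exps lookup_add)

lemma swap_var_map_key: "swap_var i f = Poly_Mapping.map_key (swap_exps i) f"
  by (simp add: swap_var_def swap_exps_def[abs_def])

lemma lookup_swap_var: "lookup (swap_var i f) m = lookup f (swap_exps i m)"
  by (simp add: swap_var_map_key map_key.rep_eq[OF inj_swap_exps])

lemma swap_var_add: "swap_var i (f + g) = swap_var i f + swap_var i g"
  by (rule poly_mapping_eqI) (simp add: lookup_swap_var lookup_add)

lemma swap_var_uminus: "swap_var i (- f) = - (swap_var i f :: 'a::comm_ring_1 mpoly)"
  by (rule poly_mapping_eqI) (simp add: lookup_swap_var)

lemma swap_var_sum: "swap_var i (sum F A) = (\<Sum>x\<in>A. swap_var i (F x))"
  by (rule poly_mapping_eqI) (simp add: lookup_swap_var lookup_sum)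

lemma swap_var_single: "swap_var i (single m c) = single (swap_exps i m) c"
  by (rule poly_mapping_eqI) (simp add: lookup_swap_var lookup_single when_def, metis swap_exps_swap_exps)

lemma swap_var_mult: "swap_var i (f * g) = swap_var i f * (swap_var i g :: 'a::comm_ring_1 mpoly)"
proof -
  have e: "f * g = (\<Sum>a\<in>keys f. \<Sum>b\<in>keys g.
      single a (lookup f a) * single b (lookup g b))"
    by (subst poly_mapping_sum_single[of f], subst poly_mapping_sum_single[of g]) (simp add: sum_product)
  have "swap_var i f * swap_var i g = (\<Sum>a\<in>keys f. \<Sum>b\<in>keys g.
      single (swap_exps i a) (lookup f a) * single (swap_exps i b) (lookup g b))"
    by (subst poly_mapping_sum_single[of f], subst poly_mapping_sum_single[of g])
      (simp add: sum_product swap_var_sum swap_var_single)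
  then show ?thesis using e
    by (simp add: swap_var_sum mult_single swap_var_single swap_exps_add)
qed

lemma swap_var_monom: "swap_var i (monom m) = monom (swap_exps i m)"
  by (simp add: monom_def swap_var_single)

lemma swap_var_one [simp]: "swap_var i 1 = (1 :: 'a::comm_ring_1 mpoly)"
proof -
  have "swap_exps i 0 = 0" by (rule poly_mapping_eqI) (simp add: lookup_swap_exps)
  then show ?thesis using swap_var_monom[of i 0] by (simp add: monom_0)
qed

lemma swap_exps_single: "swap_exps i (single k p) = single (swap_idx i (i+1) k) p"
  by (rule poly_mapping_eqI) (simp add: lookup_swap_exps lookup_single when_def, metis swap_idx_invol)

lemma swap_var_var: "swap_var i (var k) = (var (swap_idx i (i+1) k) :: 'a::comm_ring_1 mpoly)"
  by (simp add: var_eq_monom swap_var_monom swap_exps_single)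

lemma swap_var_power: "swap_var i (f ^ p) = (swap_var i f :: 'a::comm_ring_1 mpoly) ^ p"
  by (induction p) (simp_all add: swap_var_mult)

definition erase_exps :: "nat \<Rightarrow> (nat \<Rightarrow>\<^sub>0 nat) \<Rightarrow> (nat \<Rightarrow>\<^sub>0 nat)" where
  "erase_exps i m = Poly_Mapping.update i 0 (Poly_Mapping.update (i+1) 0 m)"

lemma lookup_erase_exps: "lookup (erase_exps i m) k = (if k = i \<or> k = i+1 then 0 else lookup m k)"
  by (simp add: erase_exps_def lookup_update)

lemma exps_decomp: "m = erase_exps i m + single i (lookup m i) + single (i+1) (lookup m (i+1))"
  by (rule poly_mapping_eqI) (simp add: lookup_erase_exps lookup_add lookup_single when_def)

lemma swap_exps_decomp: "swap_exps i m = erase_exps i m + single i (lookup m (i+1)) + single (i+1) (lookup m i)"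
  by (rule poly_mapping_eqI) (simp add: lookup_erase_exps lookup_add lookup_single when_def lookup_swap_exps swap_idx_def)

definition set_exps :: "nat \<Rightarrow> (nat \<Rightarrow>\<^sub>0 nat) \<Rightarrow> nat \<Rightarrow> nat \<Rightarrow> (nat \<Rightarrow>\<^sub>0 nat)" where
  "set_exps i m p q = erase_exps i m + single i p + single (i+1) q"

lemma set_exps_same: "set_exps i m (lookup m i) (lookup m (Suc i)) = m"
  unfolding set_exps_def Suc_eq_plus1 by (rule exps_decomp[symmetric])

lemma set_exps_swapped: "set_exps i m (lookup m (Suc i)) (lookup m i) = swap_exps i m"
  unfolding set_exps_def Suc_eq_plus1 by (rule swap_exps_decomp[symmetric])

lemma var_mult_set_exps: "(var i :: 'a::comm_ring_1 mpoly) * monom (set_exps i m p q) = monom (set_exps i m (Suc p) q)"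
  unfolding var_eq_monom monom_mult
  by (rule arg_cong[where f=monom], rule poly_mapping_eqI) (simp add: set_exps_def lookup_add lookup_single when_def)

lemma var_Suc_mult_set_exps:
  "(var (Suc i) :: 'a::comm_ring_1 mpoly) * monom (set_exps i m p q) = monom (set_exps i m p (Suc q))"
  unfolding var_eq_monom monom_mult
  by (rule arg_cong[where f=monom], rule poly_mapping_eqI) (simp add: set_exps_def lookup_add lookup_single when_def)

definition total_deg :: "(nat \<Rightarrow>\<^sub>0 nat) \<Rightarrow> nat" where "total_deg m = Sum_any (lookup m)"

lemma total_deg_add: "total_deg (a + b) = total_deg a + total_deg b"
  unfolding total_deg_def lookup_add by (rule Sum_any.distrib) simp_all

lemma total_deg_single: "total_deg (single k p) = p"
  unfolding total_deg_def lookup_single by simp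

lemma total_deg_0 [simp]: "total_deg 0 = 0"
  unfolding total_deg_def by simp

lemma total_deg_set_exps: "total_deg (set_exps i m p q) + lookup m i + lookup m (Suc i) = total_deg m + p + q"
proof -
  have "total_deg m = total_deg (erase_exps i m) + lookup m i + lookup m (Suc i)"
    by (subst exps_decomp[of m i]) (simp add: total_deg_add total_deg_single)
  then show ?thesis by (simp add: set_exps_def total_deg_add total_deg_single)
qed

lemma lookup_set_exps: "k \<noteq> i \<Longrightarrow> k \<noteq> Suc i \<Longrightarrow> lookup (set_exps i m p q) k = lookup m k"
  by (simp add: set_exps_def lookup_add lookup_single lookup_erase_exps)

lemma keys_monom: "keys (monom m :: 'a::comm_ring_1 mpoly) \<subseteq> {m}"
  by (simp add: monom_def)

lemma total_deg_eq_sum_keys: "total_deg m = sum (lookup m) (keys m)"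
proof -
  have "keys m = {a. lookup m a \<noteq> 0}" by (auto simp: in_keys_iff)
  then show ?thesis unfolding total_deg_def by (simp add: Sum_any.expand_set)
qed

lemma total_deg_pos: "m \<noteq> 0 \<Longrightarrow> 1 \<le> total_deg m"
proof -
  assume "m \<noteq> 0"
  then obtain k where k: "lookup m k \<noteq> 0" by (metis lookup_zero poly_mapping_eqI)
  then have "k \<in> keys m" by (simp add: in_keys_iff)
  then have "lookup m k \<le> total_deg m" unfolding total_deg_eq_sum_keys by (intro member_le_sum) auto
  then show ?thesis using k by simp
qed

lemma total_deg_keys_mult:
  assumes "\<forall>m\<in>keys g. d \<le> total_deg m"
  shows "\<forall>m\<in>keys (c * g :: 'a::comm_ring_1 mpoly). d \<le> total_deg m"
proof
  fix m assume "m \<in> keys (c * g)"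
  then have "m \<in> {a + b | a b. a \<in> keys c \<and> b \<in> keys g}"
    by (rule subsetD[OF keys_mult])
  then obtain a b where "m = a + b" "b \<in> keys g" by blast
  then show "d \<le> total_deg m" using assms by (auto simp: total_deg_add)
qed

lemma keys_var_power: "keys (var j ^ l :: 'a::comm_ring_1 mpoly) \<subseteq> {single j l}"
  by (simp add: var_power keys_monom)

lemma swap_exps_fixed: "lookup m i = lookup m (Suc i) \<Longrightarrow> swap_exps i m = m"
  by (rule poly_mapping_eqI) (simp add: lookup_swap_exps swap_idx_def)

lemma swap_exps_0: "swap_exps i 0 = 0"
  by (rule poly_mapping_eqI) (simp add: lookup_swap_exps)

lemma swap_var_single_0: "swap_var i (single 0 a) = single 0 a"
  by (simp add: swap_var_single swap_exps_0)

lemma lookup_single_0_mult: "lookup (single 0 a * q) m = a * lookup q m"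
  by (simp add: mult_map_scale_conv_mult[symmetric] Poly_Mapping.map.rep_eq when_def)

lemma lookup_mult_0:
  fixes g q :: "'a::comm_ring_1 mpoly"
  assumes "lookup g 0 = 0"
  shows "lookup (g * q) 0 = (0::'a::comm_ring_1)"
proof -
  have "0 \<notin> keys (g * q)"
  proof
    assume "0 \<in> keys (g * q)"
    then have "0 \<in> {a + b | a b. a \<in> keys g \<and> b \<in> keys q}"
      by (rule subsetD[OF keys_mult])
    then obtain a b where ab: "0 = a + b" "a \<in> keys g" by blast
    have "lookup a k = 0" for k
    proof -
      have "lookup (a + b) k = 0" using ab(1) by (metis lookup_zero)
      then show ?thesis by (simp add: lookup_add)
    qed
    then have "a = 0" by (intro poly_mapping_eqI) simp
    then show False using assms ab(2) by (simp add: in_keys_iff)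
  qed
  then show ?thesis by (simp add: in_keys_iff)
qed

lemma lookup_minus_one_power: "lookup ((- 1) ^ k :: 'a::comm_ring_1 mpoly) 0 = (- 1) ^ k"
  by (cases "even k") (simp_all add: lookup_one)

definition exps_of_set :: "nat set \<Rightarrow> (nat \<Rightarrow>\<^sub>0 nat)" where
  "exps_of_set T = (\<Sum>k\<in>T. single k 1)"

lemma total_deg_exps_of_set: "finite T \<Longrightarrow> total_deg (exps_of_set T) = card T"
  unfolding exps_of_set_def by (induction T rule: finite_induct) (simp_all add: total_deg_add total_deg_single)

lemma prod_var_eq_monom: "finite T \<Longrightarrow> (\<Prod>k\<in>T. var k) = (monom (exps_of_set T) :: 'a::comm_ring_1 mpoly)"
  unfolding exps_of_set_def by (induction T rule: finite_induct) (simp_all add: monom_0 var_eq_monom monom_mult)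

lemma swap_var_prod: "swap_var i (\<Prod>k\<in>T. f k) = (\<Prod>k\<in>T. swap_var i (f k :: 'a::comm_ring_1 mpoly))"
proof (cases "finite T")
  case True then show ?thesis by (induction T rule: finite_induct) (simp_all add: swap_var_mult)
qed simp

lemma swap_var_prod_var:
  assumes "k \<notin> V" "Suc k \<notin> V"
  shows "swap_var k (\<Prod>x\<in>V. var x) = (\<Prod>x\<in>V. var x :: 'a::comm_ring_1 mpoly)"
  unfolding swap_var_prod
  by (rule prod.cong[OF refl]) (use assms in \<open>auto simp: swap_var_var swap_idx_def\<close>)

lemma swap_var_minus_one_power: "swap_var k ((- 1) ^ j) = ((- 1) ^ j :: 'a::comm_ring_1 mpoly)"
  by (simp add: swap_var_power swap_var_uminus)

section \<open>Divided differences\<close>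

text \<open>\<open>divdiff_ladder i m a b\<close> is \<open>(x\<^sub>i\<^sup>a x\<^sub>i\<^sub>+\<^sub>1\<^sup>b - x\<^sub>i\<^sup>b x\<^sub>i\<^sub>+\<^sub>1\<^sup>a) / (x\<^sub>i - x\<^sub>i\<^sub>+\<^sub>1)\<close> for \<open>b \<le> a\<close>,
  times the other variables of \<open>x\<^sup>m\<close>.\<close>

definition divdiff_ladder :: "nat \<Rightarrow> (nat \<Rightarrow>\<^sub>0 nat) \<Rightarrow> nat \<Rightarrow> nat \<Rightarrow> 'a::comm_ring_1 mpoly" where
  "divdiff_ladder i m a b = (\<Sum>t<a - b. monom (set_exps i m (b + t) (a - 1 - t)))"

definition divdiff_monom :: "nat \<Rightarrow> (nat \<Rightarrow>\<^sub>0 nat) \<Rightarrow> 'a::comm_ring_1 mpoly" where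
  "divdiff_monom i m = (if lookup m (Suc i) \<le> lookup m i
     then divdiff_ladder i m (lookup m i) (lookup m (Suc i))
     else - divdiff_ladder i m (lookup m (Suc i)) (lookup m i))"

lemma var_diff_mult_divdiff_ladder:
  assumes "b \<le> a"
  shows "(var i - var (Suc i)) * divdiff_ladder i m a b
     = (monom (set_exps i m a b) - monom (set_exps i m b a) :: 'a::comm_ring_1 mpoly)"
proof -
  define f where "f t = (monom (set_exps i m (b + t) (a - t)) :: 'a mpoly)" for t
  have "(var i - var (Suc i)) * monom (set_exps i m (b + t) (a - 1 - t)) = f (Suc t) - f t"
    if "t < a - b" for t
  proof -
    have "a - 1 - t = a - Suc t" "Suc (a - Suc t) = a - t" using that by arith+
    then show ?thesis
      by (simp add: f_def left_diff_distrib var_mult_set_exps var_Suc_mult_set_exps)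
  qed
  then have "(var i - var (Suc i)) * divdiff_ladder i m a b = (\<Sum>t<a - b. f (Suc t) - f t)"
    unfolding divdiff_ladder_def sum_distrib_left by (intro sum.cong) auto
  also have "\<dots> = f (a - b) - f 0" by (rule sum_lessThan_telescope)
  finally show ?thesis using assms by (simp add: f_def)
qed

lemma var_diff_mult_divdiff_monom:
  "(var i - var (Suc i)) * divdiff_monom i m = monom m - (monom (swap_exps i m) :: 'a::comm_ring_1 mpoly)"
proof (cases "lookup m (Suc i) \<le> lookup m i")
  case True
  then show ?thesis using var_diff_mult_divdiff_ladder[OF True, of i m]
    by (simp add: divdiff_monom_def set_exps_same set_exps_swapped)
next
  case False
  then have "lookup m i \<le> lookup m (Suc i)" by simp
  from var_diff_mult_divdiff_ladder[OF this, of i m]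
  have "(var i - var (Suc i)) * divdiff_ladder i m (lookup m (Suc i)) (lookup m i)
      = monom (swap_exps i m) - (monom m :: 'a mpoly)"
    by (simp only: set_exps_same set_exps_swapped)
  moreover have "divdiff_monom i m = - divdiff_ladder i m (lookup m (Suc i)) (lookup m i)"
    using False by (simp add: divdiff_monom_def)
  ultimately show ?thesis by (metis minus_diff_eq mult_minus_right)
qed

lemma keys_divdiff_ladder:
  assumes "x \<in> keys (divdiff_ladder i m a b :: 'a::comm_ring_1 mpoly)"
  obtains p q where "x = set_exps i m p q" "p + q + 1 = a + b"
proof -
  obtain t where "t < a - b" "x \<in> keys (monom (set_exps i m (b + t) (a - 1 - t)) :: 'a mpoly)"
    using subsetD[OF keys_sum assms[unfolded divdiff_ladder_def]] by blast
  then show ?thesis using keys_monom that[of "b + t" "a - 1 - t"] by fastforce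
qed

lemma keys_divdiff_monom:
  assumes "x \<in> keys (divdiff_monom i m :: 'a::comm_ring_1 mpoly)"
  obtains p q where "x = set_exps i m p q" "p + q + 1 = lookup m i + lookup m (Suc i)"
proof (cases "lookup m (Suc i) \<le> lookup m i")
  case True
  then show ?thesis using assms that by (auto simp: divdiff_monom_def elim: keys_divdiff_ladder)
next
  case False
  then have "x \<in> keys (divdiff_ladder i m (lookup m (Suc i)) (lookup m i) :: 'a mpoly)"
    using assms by (simp add: divdiff_monom_def keys_minus)
  then show ?thesis by (rule keys_divdiff_ladder) (simp add: that)
qed

definition divdiff :: "nat \<Rightarrow> 'a::comm_ring_1 mpoly \<Rightarrow> 'a mpoly" where
  "divdiff i p = (\<Sum>m\<in>keys p. single 0 (lookup p m) * divdiff_monom i m)"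

lemma single_0_mult_monom: "single 0 c * monom m = single m (c::'a::comm_ring_1)"
  by (simp add: monom_def mult_single)

lemma var_diff_mult_divdiff: "(var i - var (Suc i)) * divdiff i p = p - swap_var i (p :: 'a::comm_ring_1 mpoly)"
proof -
  have "(var i - var (Suc i)) * divdiff i p =
     (\<Sum>m\<in>keys p. single 0 (lookup p m) * ((var i - var (Suc i)) * divdiff_monom i m))"
    by (simp add: divdiff_def sum_distrib_left algebra_simps)
  also have "\<dots> = (\<Sum>m\<in>keys p. single m (lookup p m) - single (swap_exps i m) (lookup p m))"
    by (simp only: var_diff_mult_divdiff_monom) (simp add: right_diff_distrib single_0_mult_monom)
  also have "\<dots> = p - swap_var i p"
    by (subst (3 4) poly_mapping_sum_single[of p]) (simp add: sum_subtractf swap_var_sum swap_var_single)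
  finally show ?thesis .
qed

lemma keys_single_0_mult: "keys (single 0 c * q) \<subseteq> keys (q :: 'a::comm_ring_1 mpoly)"
  using keys_mult[of "single 0 c" q] by (auto split: if_splits)

lemma keys_divdiff:
  assumes "x \<in> keys (divdiff i (p :: 'a::comm_ring_1 mpoly))"
  shows "\<exists>m\<in>keys p. total_deg m = Suc (total_deg x) \<and>
    (\<forall>k. k \<noteq> i \<longrightarrow> k \<noteq> Suc i \<longrightarrow> lookup x k = lookup m k)"
proof -
  have "x \<in> (\<Union>m\<in>keys p. keys (single 0 (lookup p m) * (divdiff_monom i m :: 'a mpoly)))"
    using assms unfolding divdiff_def by (rule subsetD[OF keys_sum])
  then obtain m where m: "m \<in> keys p"
    and "x \<in> keys (single 0 (lookup p m) * (divdiff_monom i m :: 'a mpoly))"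
    by blast
  then have "x \<in> keys (divdiff_monom i m :: 'a mpoly)" using keys_single_0_mult by blast
  then obtain a b where x: "x = set_exps i m a b" "a + b + 1 = lookup m i + lookup m (Suc i)"
    by (rule keys_divdiff_monom)
  have "total_deg m = Suc (total_deg x)" using total_deg_set_exps[of i m a b] x by simp
  moreover have "\<forall>k. k \<noteq> i \<longrightarrow> k \<noteq> Suc i \<longrightarrow> lookup x k = lookup m k"
    using x lookup_set_exps by simp
  ultimately show ?thesis using m by blast
qed

lemma var_diff_nonzero: "(var i - var (Suc i) :: 'a::field mpoly) \<noteq> 0"
proof
  assume "(var i - var (Suc i) :: 'a::field mpoly) = 0"
  then have "lookup (var i - var (Suc i) :: 'a mpoly) (single i 1) = 0" by simp
  moreover have "single (Suc i) (1::nat) \<noteq> single i 1"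
    by (metis lookup_single_eq lookup_single_not_eq n_not_Suc_n zero_neq_one)
  ultimately show False by (simp add: lookup_minus var_def lookup_single when_def)
qed

lemma var_diff_mult_cancel:
  "(var i - var (Suc i)) * a = (var i - var (Suc i)) * b \<Longrightarrow> a = (b :: 'a::field mpoly)"
proof -
  assume "(var i - var (Suc i)) * a = (var i - var (Suc i)) * b"
  then have "(var i - var (Suc i)) * (a - b) = 0" by (simp add: right_diff_distrib)
  then show "a = b" using var_diff_nonzero[of i] by (simp, blast)
qed

lemma divdiff_unique: "(var i - var (Suc i)) * q = p - swap_var i p \<Longrightarrow> divdiff i p = (q :: 'a::field mpoly)"
  using var_diff_mult_cancel var_diff_mult_divdiff by metis

lemma var_diff_mult_demazure_formula:
  "(var i - var (Suc i)) * (f + var (Suc i) * divdiff i f) =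
    var i * f - var (Suc i) * swap_var i (f :: 'a::field mpoly)"
proof -
  have "(var i - var (Suc i)) * (f + var (Suc i) * divdiff i f) =
      (var i - var (Suc i)) * f + var (Suc i) * ((var i - var (Suc i)) * divdiff i f)"
    by (simp add: algebra_simps)
  also have "\<dots> = (var i - var (Suc i)) * f + var (Suc i) * (f - swap_var i f)" by (simp only: var_diff_mult_divdiff)
  also have "\<dots> = var i * f - var (Suc i) * swap_var i f" by (simp add: algebra_simps)
  finally show ?thesis .
qed

lemma demazure_eq_divdiff: "demazure i f = f + var (Suc i) * divdiff i (f :: 'a::field mpoly)"
  unfolding demazure_def Suc_eq_plus1[symmetric]
proof (rule the_equality)
  show "(var i - var (Suc i)) * (f + var (Suc i) * divdiff i f) = var i * f - var (Suc i) * swap_var i f"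
    by (rule var_diff_mult_demazure_formula)
next
  fix g assume "(var i - var (Suc i)) * g = var i * f - var (Suc i) * swap_var i f"
  then show "g = f + var (Suc i) * divdiff i f" using var_diff_mult_cancel var_diff_mult_demazure_formula by metis
qed

lemma divdiff_add: "divdiff i (p + q) = divdiff i p + divdiff i (q :: 'a::field mpoly)"
  by (rule divdiff_unique) (simp add: distrib_left var_diff_mult_divdiff swap_var_add)

lemma divdiff_uminus: "divdiff i (- p) = - divdiff i (p :: 'a::field mpoly)"
  by (rule divdiff_unique) (simp add: var_diff_mult_divdiff swap_var_uminus)

lemma divdiff_zero: "divdiff i 0 = (0 :: 'a::field mpoly)"
proof (rule divdiff_unique)
  have "swap_var i (0 :: 'a mpoly) = 0" by (rule poly_mapping_eqI) (simp add: lookup_swap_var)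
  then show "(var i - var (Suc i)) * 0 = (0 :: 'a mpoly) - swap_var i 0" by simp
qed

lemma divdiff_sum: "finite A \<Longrightarrow> divdiff i (sum F A) = (\<Sum>x\<in>A. divdiff i (F x :: 'a::field mpoly))"
  by (induction A rule: finite_induct) (simp_all add: divdiff_zero divdiff_add)

lemma divdiff_mult: "divdiff i (c * g) = c * divdiff i g + swap_var i g * divdiff i (c :: 'a::field mpoly)"
proof (rule divdiff_unique)
  have "(var i - var (Suc i)) * (c * divdiff i g + swap_var i g * divdiff i c) =
    c * ((var i - var (Suc i)) * divdiff i g) + swap_var i g * ((var i - var (Suc i)) * divdiff i c)"
    by (simp add: algebra_simps)
  also have "\<dots> = c * (g - swap_var i g) + swap_var i g * (c - swap_var i c)" by (simp only: var_diff_mult_divdiff)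
  also have "\<dots> = c * g - swap_var i (c * g)" by (simp add: swap_var_mult algebra_simps)
  finally show "(var i - var (Suc i)) * (c * divdiff i g + swap_var i g * divdiff i c) = c * g - swap_var i (c * g)" .
qed

lemma divdiff_symmetric: "swap_var i g = g \<Longrightarrow> divdiff i g = (0 :: 'a::field mpoly)"
  by (rule divdiff_unique) simp

lemma divdiff_mult_symmetric: "swap_var i g = g \<Longrightarrow> divdiff i (g * c) = g * divdiff i (c :: 'a::field mpoly)"
  by (simp add: divdiff_mult divdiff_symmetric mult.commute)

lemma divdiff_var_Suc: "divdiff k (var (Suc k)) = (- 1 :: 'a::field mpoly)"
  by (rule divdiff_unique) (simp add: swap_var_var swap_idx_def algebra_simps)

lemma divdiff_var: "divdiff k (var k) = (1 :: 'a::field mpoly)"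
  by (rule divdiff_unique) (simp add: swap_var_var swap_idx_def)

lemma divdiff_prod_var:
  assumes "finite V" "k \<notin> V"
  shows "divdiff k (\<Prod>x\<in>V. var x) =
    (if Suc k \<in> V then - (\<Prod>x\<in>V - {Suc k}. var x) else (0 :: 'a::field mpoly))"
proof (cases "Suc k \<in> V")
  case True
  have sym: "swap_var k (\<Prod>x\<in>V - {Suc k}. var x) = (\<Prod>x\<in>V - {Suc k}. var x :: 'a mpoly)"
    by (rule swap_var_prod_var) (use assms in auto)
  have "(\<Prod>x\<in>V. var x :: 'a mpoly) = (\<Prod>x\<in>V - {Suc k}. var x) * var (Suc k)"
    using prod.remove[OF assms(1) True, of var] by (simp add: ac_simps)
  then show ?thesis using True by (simp add: divdiff_mult_symmetric[OF sym] divdiff_var_Suc)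
next
  case False
  then show ?thesis using assms by (simp add: divdiff_symmetric swap_var_prod_var)
qed

section \<open>Elementary symmetric polynomials\<close>

lemma subsets_insert_card_eq:
  assumes "finite A" "a \<notin> A" "1 \<le> r"
  shows "{T. T \<subseteq> insert a A \<and> card T = r} =
     {T. T \<subseteq> A \<and> card T = r} \<union> insert a ` {T. T \<subseteq> A \<and> card T = r - 1}"
proof (intro set_eqI iffI)
  fix T assume "T \<in> {T. T \<subseteq> insert a A \<and> card T = r}"
  then have T: "T \<subseteq> insert a A" "card T = r" by auto
  show "T \<in> {T. T \<subseteq> A \<and> card T = r} \<union> insert a ` {T. T \<subseteq> A \<and> card T = r - 1}"
  proof (cases "a \<in> T")
    case True
    then have "T = insert a (T - {a})" by auto
    moreover have "T - {a} \<subseteq> A" "card (T - {a}) = r - 1"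
      using T True assms(1) by (auto intro: finite_subset simp: card_Diff_singleton)
    ultimately show ?thesis by blast
  next
    case False then show ?thesis using T by auto
  qed
next
  fix T assume "T \<in> {T. T \<subseteq> A \<and> card T = r} \<union> insert a ` {T. T \<subseteq> A \<and> card T = r - 1}"
  then show "T \<in> {T. T \<subseteq> insert a A \<and> card T = r}"
  proof
    assume "T \<in> insert a ` {T. T \<subseteq> A \<and> card T = r - 1}"
    then obtain U where U: "U \<subseteq> A" "card U = r - 1" "T = insert a U" by auto
    then have "finite U" "a \<notin> U" using assms finite_subset by auto
    then show ?thesis using U assms(3) by auto
  qed auto
qed

lemma esym_insert:
  assumes "finite A" "a \<notin> A" "1 \<le> r"
  shows "(esym r (insert a A) :: 'a::comm_ring_1 mpoly) = esym r A + var a * esym (r - 1) A"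
proof -
  let ?X = "{T. T \<subseteq> A \<and> card T = r}" and ?Y = "{T. T \<subseteq> A \<and> card T = r - 1}"
  have fin: "finite ?X" "finite ?Y" using assms(1) by (auto intro: finite_subset[of _ "Pow A"])
  have disj: "?X \<inter> insert a ` ?Y = {}" using assms(2) by auto
  have inj: "inj_on (insert a) ?Y"
    using assms(2) by (intro inj_onI) (metis (no_types, lifting) mem_Collect_eq insert_ident subsetD)
  have "(esym r (insert a A) :: 'a mpoly) =
      (\<Sum>T\<in>?X. \<Prod>k\<in>T. var k) + (\<Sum>T\<in>insert a ` ?Y. \<Prod>k\<in>T. var k)"
    unfolding esym_def subsets_insert_card_eq[OF assms] using fin disj by (intro sum.union_disjoint) auto
  also have "(\<Sum>T\<in>insert a ` ?Y. \<Prod>k\<in>T. var k) = (\<Sum>T\<in>?Y. (\<Prod>k\<in>insert a T. var k :: 'a mpoly))"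
    by (rule sum.reindex[OF inj, unfolded comp_def])
  also have "\<dots> = (\<Sum>T\<in>?Y. var a * (\<Prod>k\<in>T. var k :: 'a mpoly))"
    using assms by (intro sum.cong refl prod.insert) (auto intro: finite_subset)
  finally show ?thesis by (simp add: esym_def sum_distrib_left)
qed

lemma esym_0: "finite A \<Longrightarrow> esym 0 A = (1 :: 'a::comm_ring_1 mpoly)"
proof -
  assume "finite A"
  then have "{T. T \<subseteq> A \<and> card T = 0} = {{}}" using finite_subset by fastforce
  then show ?thesis by (simp add: esym_def)
qed

lemma esym_eq_0:
  assumes "finite A" "card A < r"
  shows "esym r A = (0 :: 'a::comm_ring_1 mpoly)"
proof -
  have "{T. T \<subseteq> A \<and> card T = r} = {}"
  proof (rule equals0I)
    fix T assume "T \<in> {T. T \<subseteq> A \<and> card T = r}"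
    then have "r \<le> card A" using card_mono[OF assms(1)] by auto
    then show False using assms(2) by simp
  qed
  then show ?thesis unfolding esym_def by (simp only: sum.empty)
qed

lemma image_subsets_card_eq:
  assumes "inj f"
  shows "image f ` {T. T \<subseteq> S \<and> card T = r} = {T. T \<subseteq> f ` S \<and> card T = r}"
proof (intro set_eqI iffI)
  fix T assume "T \<in> image f ` {T. T \<subseteq> S \<and> card T = r}"
  then obtain U where U: "U \<subseteq> S" "card U = r" "T = f ` U" by blast
  have "inj_on f U" using assms by (rule inj_on_subset) simp
  then show "T \<in> {T. T \<subseteq> f ` S \<and> card T = r}" using U by (simp add: card_image image_mono)
next
  fix T assume T: "T \<in> {T. T \<subseteq> f ` S \<and> card T = r}"
  then obtain U where U: "U \<subseteq> S" "T = f ` U" by (blast elim: subset_imageE)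
  have "inj_on f U" using assms by (rule inj_on_subset) simp
  then have "card U = r" using T U(2) by (simp add: card_image)
  then show "T \<in> image f ` {T. T \<subseteq> S \<and> card T = r}" using U by blast
qed

lemma swap_var_esym: "swap_var i (esym r S) = (esym r (swap_idx i (Suc i) ` S) :: 'a::comm_ring_1 mpoly)"
proof -
  let ?s = "swap_idx i (Suc i)"
  have inj: "inj ?s" by (rule inj_swap_idx)
  have "swap_var i (esym r S) = (\<Sum>T\<in>{T. T \<subseteq> S \<and> card T = r}. (\<Prod>k\<in>?s ` T. var k :: 'a mpoly))"
    unfolding esym_def swap_var_sum swap_var_prod swap_var_var
    by (rule sum.cong[OF refl]) (simp add: prod.reindex[OF inj_on_subset[OF inj subset_UNIV]] comp_def)
  also have "\<dots> = (\<Sum>T\<in>image ?s ` {T. T \<subseteq> S \<and> card T = r}. (\<Prod>k\<in>T. var k :: 'a mpoly))"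
    by (rule sum.reindex[symmetric, unfolded comp_def]) (meson inj_image_eq_iff inj_onI inj)
  also have "image ?s ` {T. T \<subseteq> S \<and> card T = r} = {T. T \<subseteq> ?s ` S \<and> card T = r}"
    by (rule image_subsets_card_eq[OF inj])
  finally show ?thesis unfolding esym_def .
qed

lemma swap_idx_image_eq:
  assumes "(i \<in> S \<longleftrightarrow> Suc i \<in> S)"
  shows "swap_idx i (Suc i) ` S = S"
  using assms by (auto simp: swap_idx_def image_iff split: if_splits)

lemma total_deg_keys_esym:
  assumes "finite S" "m \<in> keys (esym r S :: 'a::comm_ring_1 mpoly)"
  shows "total_deg m = r"
proof -
  have "m \<in> (\<Union>T\<in>{T. T \<subseteq> S \<and> card T = r}. keys (\<Prod>k\<in>T. var k :: 'a mpoly))"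
    using assms(2) unfolding esym_def by (rule subsetD[OF keys_sum])
  then obtain T where T: "T \<subseteq> S" "card T = r" "m \<in> keys (\<Prod>k\<in>T. var k :: 'a mpoly)" by blast
  have fT: "finite T" using T(1) assms(1) finite_subset by blast
  then have "m \<in> keys (monom (exps_of_set T) :: 'a mpoly)" using T(3) by (simp add: prod_var_eq_monom)
  then have "m = exps_of_set T" using keys_monom by blast
  then show ?thesis using total_deg_exps_of_set[OF fT] T(2) by simp
qed

lemma lookup_esym_0:
  assumes "finite S" "1 \<le> r"
  shows "lookup (esym r S :: 'a::comm_ring_1 mpoly) 0 = 0"
proof -
  have "0 \<notin> keys (esym r S :: 'a mpoly)" using total_deg_keys_esym[OF assms(1), of 0 r] assms(2) by auto
  then show ?thesis by (simp add: in_keys_iff)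
qed

lemma swap_var_esym_full:
  assumes "1 \<le> k" "Suc k \<le> n"
  shows "swap_var k (esym r {1..n}) = (esym r {1..n} :: 'a::comm_ring_1 mpoly)"
  using assms by (simp add: swap_var_esym swap_idx_image_eq)

lemma esym_eq_sum_insert:
  assumes "finite S" "j \<notin> S"
  shows "(esym q S :: 'a::comm_ring_1 mpoly) = (\<Sum>t\<le>q. (- var j) ^ t * esym (q - t) (insert j S))"
proof (induction q)
  case 0 then show ?case using assms by (simp add: esym_0)
next
  case (Suc q)
  have ins: "esym (Suc q) (insert j S) = esym (Suc q) S + var j * (esym q S :: 'a mpoly)"
    using esym_insert[OF assms, of "Suc q"] by simp
  have "(\<Sum>t\<le>Suc q. (- var j) ^ t * esym (Suc q - t) (insert j S)) =
     esym (Suc q) (insert j S) + (\<Sum>t\<le>q. (- var j) ^ Suc t * (esym (q - t) (insert j S) :: 'a mpoly))"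
    by (subst sum.atMost_Suc_shift) simp
  also have "\<dots> = esym (Suc q) (insert j S) - var j * esym q S"
  proof -
    have "(\<Sum>t\<le>q. (- var j) ^ Suc t * (esym (q - t) (insert j S) :: 'a mpoly)) =
        - (var j * (\<Sum>t\<le>q. (- var j) ^ t * esym (q - t) (insert j S)))"
      by (simp add: sum_distrib_left sum_negf[symmetric] mult.assoc)
    then show ?thesis by (simp add: Suc.IH[symmetric])
  qed
  also have "\<dots> = esym (Suc q) S" using ins by simp
  finally show ?case by simp
qed

lemma keys_add_nat: "keys (a + b :: nat \<Rightarrow>\<^sub>0 nat) = keys a \<union> keys b"
  by (auto simp: in_keys_iff lookup_add)

lemma polys_inI: "(\<And>m k. m \<in> keys p \<Longrightarrow> k \<in> keys m \<Longrightarrow> k \<in> {1..n}) \<Longrightarrow> p \<in> polys_in n"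
  unfolding polys_in_def by (simp add: subset_iff)

lemma polys_inD: "p \<in> polys_in n \<Longrightarrow> m \<in> keys p \<Longrightarrow> k \<in> keys m \<Longrightarrow> k \<in> {1..n}"
  unfolding polys_in_def by (simp add: subset_iff)

lemma polys_in_add: "p \<in> polys_in n \<Longrightarrow> q \<in> polys_in n \<Longrightarrow> p + q \<in> polys_in n"
proof (rule polys_inI)
  fix m k assume p: "p \<in> polys_in n" and q: "q \<in> polys_in n" and m: "m \<in> keys (p + q)" and k: "k \<in> keys m"
  have "m \<in> keys p \<or> m \<in> keys q" using m keys_add[of p q] by blast
  then show "k \<in> {1..n}" using polys_inD[OF p _ k] polys_inD[OF q _ k] by blast
qed

lemma polys_in_uminus: "p \<in> polys_in n \<Longrightarrow> - p \<in> polys_in n"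
  unfolding polys_in_def by (simp add: keys_minus)

lemma polys_in_zero: "0 \<in> polys_in n"
  unfolding polys_in_def by simp

lemma polys_in_one: "1 \<in> polys_in n"
  unfolding polys_in_def by simp

lemma polys_in_mult: "p \<in> polys_in n \<Longrightarrow> q \<in> polys_in n \<Longrightarrow> p * q \<in> polys_in n"
proof (rule polys_inI)
  fix m k assume p: "p \<in> polys_in n" and q: "q \<in> polys_in n"
    and m: "m \<in> keys (p * q)" and k: "k \<in> keys m"
  from m obtain a b where "m = a + b" "a \<in> keys p" "b \<in> keys q"
    using keys_mult by blast
  with k p q show "k \<in> {1..n}" by (auto simp: keys_add_nat dest: polys_inD)
qed

lemma polys_in_var: "k \<in> {1..n} \<Longrightarrow> var k \<in> polys_in n"
  unfolding polys_in_def var_def by simp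

lemma polys_in_divdiff:
  assumes "p \<in> polys_in n" "1 \<le> i" "Suc i \<le> n"
  shows "divdiff i (p :: 'a::comm_ring_1 mpoly) \<in> polys_in n"
proof (rule polys_inI)
  fix x k assume x: "x \<in> keys (divdiff i p)" and k: "k \<in> keys x"
  from keys_divdiff[OF x] obtain m where m: "m \<in> keys p"
    "\<forall>k. k \<noteq> i \<longrightarrow> k \<noteq> Suc i \<longrightarrow> lookup x k = lookup m k" by blast
  show "k \<in> {1..n}"
  proof (cases "k = i \<or> k = Suc i")
    case True then show ?thesis using assms by auto
  next
    case False
    then have "k \<in> keys m" using m(2) k by (simp add: in_keys_iff)
    then show ?thesis using polys_inD[OF assms(1) m(1)] by blast
  qed
qed

lemma ideal_inI:
  "finite H \<Longrightarrow> H \<subseteq> G \<Longrightarrow> (\<And>g. g \<in> H \<Longrightarrow> c g \<in> polys_in n) \<Longrightarrow>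
    f = (\<Sum>g\<in>H. c g * g) \<Longrightarrow> f \<in> ideal_in n G"
  unfolding ideal_in_def by blast

lemma ideal_in_zero: "0 \<in> ideal_in n G"
  by (rule ideal_inI[of "{}"]) auto

lemma ideal_in_gen: "g \<in> G \<Longrightarrow> g \<in> ideal_in n G"
  by (rule ideal_inI[of "{g}" _ "\<lambda>_. 1"]) (auto simp: polys_in_one)

lemma ideal_in_add:
  assumes "f1 \<in> ideal_in n G" "f2 \<in> ideal_in n G"
  shows "f1 + f2 \<in> ideal_in n G"
proof -
  obtain H1 c1 where 1: "finite H1" "H1 \<subseteq> G" "\<And>g. g \<in> H1 \<Longrightarrow> c1 g \<in> polys_in n" "f1 = (\<Sum>g\<in>H1. c1 g * g)"
    using assms(1) unfolding ideal_in_def by blast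
  obtain H2 c2 where 2: "finite H2" "H2 \<subseteq> G" "\<And>g. g \<in> H2 \<Longrightarrow> c2 g \<in> polys_in n" "f2 = (\<Sum>g\<in>H2. c2 g * g)"
    using assms(2) unfolding ideal_in_def by blast
  define c where "c g = (if g \<in> H1 then c1 g else 0) + (if g \<in> H2 then c2 g else 0)" for g
  have fin: "finite (H1 \<union> H2)" using 1 2 by simp
  have "(\<Sum>g\<in>H1 \<union> H2. c g * g) =
      (\<Sum>g\<in>H1 \<union> H2. if g \<in> H1 then c1 g * g else 0) + (\<Sum>g\<in>H1 \<union> H2. if g \<in> H2 then c2 g * g else 0)"
    unfolding sum.distrib[symmetric] by (rule sum.cong[OF refl]) (simp add: c_def distrib_right)
  also have "\<dots> = f1 + f2"
    unfolding 1(4) 2(4) sum.inter_restrict[OF fin, symmetric] by (simp add: Int_absorb1 Int_absorb2 Un_Int_eq)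
  finally show ?thesis
    using 1 2 by (intro ideal_inI[OF fin, of G c]) (auto simp: c_def polys_in_add polys_in_zero)
qed

lemma ideal_in_mult:
  assumes "f \<in> ideal_in n G" "p \<in> polys_in n"
  shows "p * f \<in> ideal_in n G"
proof -
  obtain H c where 1: "finite H" "H \<subseteq> G" "\<And>g. g \<in> H \<Longrightarrow> c g \<in> polys_in n" "f = (\<Sum>g\<in>H. c g * g)"
    using assms(1) unfolding ideal_in_def by blast
  show ?thesis
    using 1 assms(2) by (intro ideal_inI[OF 1(1,2), of "\<lambda>g. p * c g"]) (auto simp: polys_in_mult sum_distrib_left mult.assoc)
qed

lemma ideal_in_uminus: "f \<in> ideal_in n G \<Longrightarrow> - f \<in> ideal_in n (G :: 'a::comm_ring_1 mpoly set)"
  using ideal_in_mult[of f n G "- 1"] by (simp add: polys_in_uminus polys_in_one)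

lemma ideal_in_diff:
  "f1 \<in> ideal_in n G \<Longrightarrow> f2 \<in> ideal_in n G \<Longrightarrow> f1 - f2 \<in> ideal_in n (G :: 'a::comm_ring_1 mpoly set)"
  using ideal_in_add[of f1 n G "- f2"] ideal_in_uminus by fastforce

lemma ideal_in_sum: "(\<And>x. x \<in> A \<Longrightarrow> f x \<in> ideal_in n G) \<Longrightarrow> sum f A \<in> ideal_in n G"
  by (induction A rule: infinite_finite_induct) (simp_all add: ideal_in_zero ideal_in_add)

lemma esym_in_tanisaki_ideal:
  assumes "S \<subseteq> {1..n}" "1 \<le> card S" "r \<le> card S" "card S < r + dk n mu (card S)"
  shows "esym r S \<in> tanisaki_ideal n mu"
  unfolding tanisaki_ideal_def
  by (rule ideal_in_gen) (use assms in \<open>auto simp: tanisaki_gens_def\<close>)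

lemma zero_in_tanisaki_ideal: "0 \<in> tanisaki_ideal n mu"
  by (simp add: tanisaki_ideal_def ideal_in_zero)

section \<open>Partitions and their conjugates\<close>

lemma conj_part_eq_card: "conj_part n mu j = card {i\<in>{0..<n}. n + 1 - j \<le> mu ! i}"
proof -
  have "{i \<in> {1..n}. n + 1 - j \<le> mu ! (i - 1)} = Suc ` {i\<in>{0..<n}. n + 1 - j \<le> mu ! i}"
  proof (intro set_eqI iffI)
    fix x assume "x \<in> {i \<in> {1..n}. n + 1 - j \<le> mu ! (i - 1)}"
    then have x: "1 \<le> x" "x \<le> n" "n + 1 - j \<le> mu ! (x - 1)" by auto
    then have "x = Suc (x - 1)" "x - 1 \<in> {i\<in>{0..<n}. n + 1 - j \<le> mu ! i}" by auto
    then show "x \<in> Suc ` {i\<in>{0..<n}. n + 1 - j \<le> mu ! i}" by (metis image_eqI)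
  next
    fix x assume "x \<in> Suc ` {i\<in>{0..<n}. n + 1 - j \<le> mu ! i}"
    then obtain i where "x = Suc i" "i < n" "n + 1 - j \<le> mu ! i" by auto
    then show "x \<in> {i \<in> {1..n}. n + 1 - j \<le> mu ! (i - 1)}" by auto
  qed
  then show ?thesis unfolding conj_part_def by (simp add: card_image)
qed

lemma card_filter_sum: "finite A \<Longrightarrow> card {x\<in>A. P x} = (\<Sum>x\<in>A. if P x then 1 else (0::nat))"
  by (simp add: sum.If_cases Int_def)

lemma card_threshold_le:
  assumes "a \<le> n" "k \<le> n"
  shows "card {j\<in>{1..k}. n + 1 - j \<le> a} = a + k - n"
proof (cases "a = 0")
  case True
  then have "{j\<in>{1..k}. n + 1 - j \<le> a} = {}" using assms by auto
  then show ?thesis using True assms by simp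
next
  case False
  then have "{j\<in>{1..k}. n + 1 - j \<le> a} = {n + 1 - a..k}" using assms by auto
  then show ?thesis using assms by simp
qed

lemma dk_eq_sum:
  assumes P: "is_partition n mu" and k: "k \<le> n"
  shows "dk n mu k = (\<Sum>i<n. mu ! i + k - n)"
proof -
  have le: "mu ! i \<le> n" if "i < n" for i
    using P that elem_le_sum_list[of i mu] unfolding is_partition_def by simp
  have "dk n mu k = (\<Sum>j\<in>{1..k}. \<Sum>i<n. if n + 1 - j \<le> mu ! i then 1 else (0::nat))"
    unfolding dk_def conj_part_eq_card lessThan_atLeast0
    by (intro sum.cong refl, subst card_filter_sum) auto
  also have "\<dots> = (\<Sum>i<n. \<Sum>j\<in>{1..k}. if n + 1 - j \<le> mu ! i then 1 else (0::nat))"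
    by (rule sum.swap)
  also have "\<dots> = (\<Sum>i<n. card {j\<in>{1..k}. n + 1 - j \<le> mu ! i})"
    by (intro sum.cong refl, subst card_filter_sum) auto
  also have "\<dots> = (\<Sum>i<n. mu ! i + k - n)"
    using le k by (intro sum.cong refl card_threshold_le) auto
  finally show ?thesis .
qed

lemma partition_sum: "is_partition n mu \<Longrightarrow> (\<Sum>i<n. mu ! i) = n"
  unfolding is_partition_def by (auto simp: sum_list_sum_nth lessThan_atLeast0)

lemma dk_n: "is_partition n mu \<Longrightarrow> dk n mu n = n"
  using dk_eq_sum[of n mu n] partition_sum[of n mu] by simp

lemma conj_part_n: "conj_part n mu n = card {i\<in>{0..<n}. 1 \<le> mu ! i}"
  unfolding conj_part_eq_card by simp

lemma hook_conj_part_le_1: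
  assumes P: "is_partition n mu" and Hk: "is_hook n mu"
  shows "\<forall>k. 1 \<le> k \<longrightarrow> k < n \<longrightarrow> conj_part n mu k \<le> 1"
proof (intro allI impI)
  fix k assume k: "1 \<le> k" "k < n"
  obtain h where h: "1 \<le> h" "h \<le> n" "mu = replicate (n - h) 0 @ replicate (h - 1) 1 @ [n - h + 1]"
    using Hk unfolding is_hook_def by blast
  define xs :: "nat list" where "xs = replicate (n - h) 0 @ replicate (h - 1) 1"
  have mu: "mu = xs @ [n - h + 1]" using h(3) by (simp add: xs_def)
  have lxs: "length xs = n - 1" using h by (simp add: xs_def)
  have small: "mu ! i \<le> 1" if "i < n - 1" for i
  proof -
    have "mu ! i = xs ! i" using that lxs by (simp add: mu nth_append)
    moreover have "xs ! i \<in> set xs" using that lxs by simp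
    moreover have "set xs \<subseteq> {0, 1}" by (auto simp: xs_def)
    ultimately show ?thesis by auto
  qed
  have "{i\<in>{0..<n}. n + 1 - k \<le> mu ! i} \<subseteq> {n - 1}"
  proof
    fix i assume i: "i \<in> {i\<in>{0..<n}. n + 1 - k \<le> mu ! i}"
    show "i \<in> {n - 1}"
    proof (rule ccontr)
      assume "i \<notin> {n - 1}"
      then have "i < n - 1" using i by auto
      then have "mu ! i \<le> 1" by (rule small)
      then show False using i k by auto
    qed
  qed
  then have "card {i\<in>{0..<n}. n + 1 - k \<le> mu ! i} \<le> card {n - 1}" by (intro card_mono) auto
  then show "conj_part n mu k \<le> 1" unfolding conj_part_eq_card by simp
qed

lemma sorted_le_1_eq_replicate:
  fixes xs :: "nat list"
  assumes "sorted xs" "\<forall>x\<in>set xs. x \<le> 1"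
  shows "xs = replicate (count_list xs 0) 0 @ replicate (length xs - count_list xs 0) 1"
  using assms
proof (induction xs)
  case (Cons x xs)
  show ?case
  proof (cases "x = 0")
    case True
    then show ?thesis using Cons by (simp add: Suc_diff_le count_le_length)
  next
    case False
    then have ones: "\<forall>y\<in>set (x # xs). y = 1" using Cons.prems by fastforce
    then have "count_list (x # xs) 0 = 0" by (auto simp: count_list_0_iff)
    moreover have "replicate (length (x # xs)) 1 = x # xs"
      using ones by (rule replicate_length_same)
    ultimately show ?thesis by (metis append.left_neutral diff_zero replicate_0)
  qed
qed simp

lemma hook_if_butlast_le_1:
  assumes P: "is_partition n mu" and n: "1 \<le> n" and small: "\<forall>x\<in>set (butlast mu). x \<le> 1"
  shows "is_hook n mu"
proof -
  have len: "length mu = n" and "sorted mu" and sum: "sum_list mu = n"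
    using P unfolding is_partition_def by auto
  define xs where "xs = butlast mu"
  define z where "z = count_list xs 0"
  have "mu \<noteq> []" using len n by auto
  then have mu: "mu = xs @ [last mu]" by (simp add: xs_def)
  have lxs: "length xs = n - 1" using len by (simp add: xs_def)
  have z: "z \<le> n - 1" using count_le_length[of xs 0] lxs by (simp add: z_def)
  have "sorted xs" using \<open>sorted mu\<close> mu by (metis sorted_append)
  then have xs: "xs = replicate z 0 @ replicate (n - 1 - z) 1"
    using sorted_le_1_eq_replicate[of xs] small lxs len by (simp add: xs_def z_def)
  then have "last mu = z + 1" using sum mu z n by (subst (asm) mu) (simp add: sum_list_replicate)
  then have "mu = replicate (n - (n - z)) 0 @ replicate (n - z - 1) 1 @ [n - (n - z) + 1]"
    using mu xs z by (simp add: diff_diff_cancel)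
  then show ?thesis unfolding is_hook_def using z n by (intro exI[of _ "n - z"]) auto
qed

lemma not_hook_second_largest_part:
  assumes P: "is_partition n mu" and n: "1 \<le> n" and nh: "\<not> is_hook n mu"
  shows "2 \<le> n \<and> 2 \<le> mu ! (n - 2)"
proof (rule ccontr)
  assume A: "\<not> (2 \<le> n \<and> 2 \<le> mu ! (n - 2))"
  have len: "length mu = n" and srt: "sorted mu" using P unfolding is_partition_def by auto
  have "x \<le> 1" if x: "x \<in> set (butlast mu)" for x
  proof -
    obtain i where "i < length (butlast mu)" "butlast mu ! i = x"
      using x by (auto simp: in_set_conv_nth)
    then have i: "i < n - 1" "x = mu ! i" using len by (auto simp: nth_butlast)
    then have "mu ! (n - 2) \<le> 1" using A by linarith
    moreover have "mu ! i \<le> mu ! (n - 2)" using srt i len by (intro sorted_nth_mono) auto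
    ultimately show ?thesis using i by simp
  qed
  then have "is_hook n mu" using hook_if_butlast_le_1[OF P n] by blast
  then show False using nh by simp
qed

lemma conj_part_n_eq_sum: "(\<Sum>i<n. if 1 \<le> mu ! i then 1 else (0::nat)) = conj_part n mu n"
  unfolding conj_part_n lessThan_atLeast0 by (subst card_filter_sum) auto

lemma nonhook_conj_part_bounds:
  assumes P: "is_partition n mu" and n: "2 \<le> n" and a: "2 \<le> mu ! (n - 2)"
  shows "2 \<le> conj_part n mu n" "conj_part n mu n + 2 \<le> n"
proof -
  have len: "length mu = n" and srt: "sorted mu" using P unfolding is_partition_def by auto
  have big: "2 \<le> mu ! i" if "n - 2 \<le> i" "i < n" for i
    using a sorted_nth_mono[OF srt that(1)] that len by simp
  have b1: "2 \<le> mu ! (n - 2)" "2 \<le> mu ! (n - 1)" using big n by auto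
  have "{n - 2, n - 1} \<subseteq> {i\<in>{0..<n}. 1 \<le> mu ! i}" using b1 n by auto
  then have "card {n - 2, n - 1} \<le> card {i\<in>{0..<n}. 1 \<le> mu ! i}" by (intro card_mono) auto
  then show "2 \<le> conj_part n mu n" using n unfolding conj_part_n by simp
  have "(\<Sum>i<n. (if 1 \<le> mu ! i then 1 else 0) + (if n - 2 \<le> i then 1 else (0::nat))) \<le> (\<Sum>i<n. mu ! i)"
  proof (rule sum_mono)
    fix i assume i: "i \<in> {..<n}"
    show "(if 1 \<le> mu ! i then 1 else 0) + (if n - 2 \<le> i then 1 else (0::nat)) \<le> mu ! i"
    proof (cases "n - 2 \<le> i")
      case True
      then have "2 \<le> mu ! i" using big i by simp
      then show ?thesis using True by simp
    next
      case False then show ?thesis by simp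
    qed
  qed
  moreover have "(\<Sum>i<n. if n - 2 \<le> i then 1 else (0::nat)) = 2"
  proof -
    have "(\<Sum>i<n. if n - 2 \<le> i then 1 else (0::nat)) = card {i\<in>{..<n}. n - 2 \<le> i}"
      by (subst card_filter_sum) auto
    also have "{i\<in>{..<n}. n - 2 \<le> i} = {n - 2..<n}" by auto
    finally show ?thesis using n by simp
  qed
  ultimately show "conj_part n mu n + 2 \<le> n" using partition_sum[OF P] conj_part_n_eq_sum[where n=n and mu=mu] by (simp add: sum.distrib)
qed

lemma dk_pred_conj_part: "is_partition n mu \<Longrightarrow> 1 \<le> n \<Longrightarrow> dk n mu (n - 1) + conj_part n mu n = n"
proof -
  assume P: "is_partition n mu" and n: "1 \<le> n"
  obtain m where m: "n = Suc m" using n by (cases n) auto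
  have "dk n mu (Suc m) = dk n mu m + conj_part n mu (Suc m)" by (simp add: dk_def)
  then show ?thesis using dk_n[OF P] m by simp
qed

text \<open>Here \<open>n - d\<^sub>k = \<Sum>\<^sub>i min \<mu>\<^sub>i (n - k)\<close>. If \<open>d\<^sub>k > 0\<close>, the largest part exceeds \<open>n - k\<close>
  and the second largest is at least 2, so this sum is at least \<open>\<mu>'\<^sub>n + (n - k)\<close>.\<close>

lemma nonhook_dk_bound:
  assumes P: "is_partition n mu" and n: "2 \<le> n" and a: "2 \<le> mu ! (n - 2)"
    and k: "k + 2 \<le> n"
  shows "dk n mu k = 0 \<or> dk n mu k + conj_part n mu n \<le> k"
proof (cases "dk n mu k = 0")
  case False
  have len: "length mu = n" and srt: "sorted mu" using P unfolding is_partition_def by auto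
  define c where "c = n - k"
  have c2: "2 \<le> c" using k by (simp add: c_def)
  have dkf: "dk n mu k = (\<Sum>i<n. mu ! i + k - n)" using dk_eq_sum[OF P] k by simp
  obtain i where i: "i < n" "mu ! i + k - n \<noteq> 0" using False dkf by (metis (no_types, lifting) sum.neutral lessThan_iff)
  have "mu ! i \<le> mu ! (n - 1)" using srt i len by (intro sorted_nth_mono) auto
  moreover have "n < mu ! i + k" using i(2) by simp
  ultimately have top: "c < mu ! (n - 1)" unfolding c_def using k by arith
  have big: "2 \<le> mu ! (n - 2)" using a .
  have pw: "mu ! j = (mu ! j + k - n) + min (mu ! j) c" for j using k by (simp add: c_def)
  have "n = (\<Sum>j<n. (mu ! j + k - n) + min (mu ! j) c)" using partition_sum[OF P] pw by simp
  also have "\<dots> = dk n mu k + (\<Sum>j<n. min (mu ! j) c)" by (simp add: sum.distrib dkf)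
  finally have nsum: "n = dk n mu k + (\<Sum>j<n. min (mu ! j) c)" .
  have "(\<Sum>j<n. (if 1 \<le> mu ! j then 1 else 0) + (if j = n - 2 then 1 else 0) + (if j = n - 1 then c - 1 else (0::nat)))
      \<le> (\<Sum>j<n. min (mu ! j) c)"
  proof (rule sum_mono)
    fix j assume j: "j \<in> {..<n}"
    show "(if 1 \<le> mu ! j then 1 else 0) + (if j = n - 2 then 1 else 0) + (if j = n - 1 then c - 1 else 0) \<le> min (mu ! j) c"
      using top big c2 n by (cases "j = n - 1"; cases "j = n - 2") auto
  qed
  moreover have "(\<Sum>j<n. (if j = n - 2 then 1 else (0::nat))) = 1" using n by simp
  moreover have "(\<Sum>j<n. (if j = n - 1 then c - 1 else (0::nat))) = c - 1" using n by simp
  ultimately have "conj_part n mu n + 1 + (c - 1) \<le> (\<Sum>j<n. min (mu ! j) c)"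
    using conj_part_n_eq_sum[where n=n and mu=mu] by (simp add: sum.distrib)
  then have "dk n mu k + conj_part n mu n \<le> k" using nsum c2 k unfolding c_def by arith
  then show ?thesis by simp
qed simp

lemma nonhook_tanisaki_gen_cases:
  assumes P: "is_partition n mu" and n: "2 \<le> n" and a: "2 \<le> mu ! (n - 2)"
    and S: "S \<subseteq> {1..n}" "1 \<le> card S" "r \<le> card S" "card S < r + dk n mu (card S)"
  shows "(S = {1..n} \<and> 1 \<le> r) \<or> (card S = n - 1 \<and> r = conj_part n mu n) \<or> conj_part n mu n + 1 \<le> r"
proof -
  let ?l = "conj_part n mu n"
  have kn: "card S \<le> n" using card_mono[OF _ S(1)] by simp
  have lb: "?l + 2 \<le> n" using nonhook_conj_part_bounds[OF P n a] by simp
  consider "card S = n" | "card S = n - 1" | "card S + 2 \<le> n" using kn by linarith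
  then show ?thesis
  proof cases
    case 1
    then have "S = {1..n}" using S(1) by (intro card_subset_eq) auto
    moreover have "1 \<le> r" using S(4) 1 dk_n[OF P] by simp
    ultimately show ?thesis by simp
  next
    case 2
    have "dk n mu (n - 1) + ?l = n" using dk_pred_conj_part[OF P] n by simp
    then have "?l \<le> r" using S(4) 2 lb by simp
    then show ?thesis using 2 by auto
  next
    case 3
    from nonhook_dk_bound[OF P n a 3] show ?thesis using S(3,4) by auto
  qed
qed

section \<open>Hooks\<close>

lemma dk_Suc: "dk n mu (Suc k) = dk n mu k + conj_part n mu (Suc k)"
  by (simp add: dk_def)

lemma esym_Diff_in_tanisaki_ideal:
  assumes conj: "\<forall>k. 1 \<le> k \<longrightarrow> k < n \<longrightarrow> conj_part n mu k \<le> 1"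
    and S: "S \<subseteq> {1..n}" "1 \<le> card S" "r \<le> card S" "card S < r + dk n mu (card S)" "card S < n"
    and j: "j \<in> S"
  shows "esym r (S - {j}) \<in> (tanisaki_ideal n mu :: 'a::comm_ring_1 mpoly set)"
proof -
  have finS: "finite S" using S(1) finite_subset by blast
  have cA: "card (S - {j}) = card S - 1" using j finS by simp
  show ?thesis
  proof (cases "r \<le> card (S - {j})")
    case False
    then have "esym r (S - {j}) = (0 :: 'a mpoly)" using finS by (intro esym_eq_0) auto
    then show ?thesis by (simp add: tanisaki_ideal_def ideal_in_zero)
  next
    case True
    from S(2) obtain k where k: "card S = Suc k" by (cases "card S") auto
    have "conj_part n mu (Suc k) \<le> 1" using conj S(5) k by auto
    then have "card S - 1 < r + dk n mu (card S - 1)" using S(4) k dk_Suc[of n mu k] by simp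
    show ?thesis
    proof (cases "r = 0")
      case True
      have "esym 0 S \<in> (tanisaki_ideal n mu :: 'a mpoly set)" using S True by (intro esym_in_tanisaki_ideal) auto
      then show ?thesis using True finS by (simp add: esym_0)
    next
      case False
      then have "1 \<le> card (S - {j})" using \<open>r \<le> card (S - {j})\<close> by simp
      with \<open>card S - 1 < r + dk n mu (card S - 1)\<close> \<open>r \<le> card (S - {j})\<close> show ?thesis
        using S(1) cA by (intro esym_in_tanisaki_ideal) auto
    qed
  qed
qed

lemma divdiff_esym_insert:
  assumes "finite A" "i \<notin> A" "Suc i \<notin> A" "1 \<le> r"
  shows "divdiff i (esym r (insert i A)) = (esym (r - 1) A :: 'a::field mpoly)"
proof (rule divdiff_unique)
  have "swap_idx i (Suc i) ` insert i A = insert (Suc i) A"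
    using assms swap_idx_image_eq[of i A] by simp
  then have "swap_var i (esym r (insert i A)) = (esym r (insert (Suc i) A) :: 'a mpoly)"
    by (simp add: swap_var_esym)
  then show "(var i - var (Suc i)) * esym (r - 1) A =
      esym r (insert i A) - swap_var i (esym r (insert i A) :: 'a mpoly)"
    unfolding esym_insert[OF assms(1,2,4)] esym_insert[OF assms(1,3,4)] by (simp add: algebra_simps)
qed

lemma divdiff_esym_insert_Suc:
  assumes "finite A" "i \<notin> A" "Suc i \<notin> A" "1 \<le> r"
  shows "divdiff i (esym r (insert (Suc i) A)) = - (esym (r - 1) A :: 'a::field mpoly)"
proof (rule divdiff_unique)
  have "swap_idx i (Suc i) ` insert (Suc i) A = insert i A"
    using assms swap_idx_image_eq[of i A] by simp
  then have "swap_var i (esym r (insert (Suc i) A)) = (esym r (insert i A) :: 'a mpoly)"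
    by (simp add: swap_var_esym)
  then show "(var i - var (Suc i)) * - esym (r - 1) A =
      esym r (insert (Suc i) A) - swap_var i (esym r (insert (Suc i) A) :: 'a mpoly)"
    unfolding esym_insert[OF assms(1,2,4)] esym_insert[OF assms(1,3,4)] by (simp add: algebra_simps)
qed

lemma card_less_if_missing:
  assumes "S \<subseteq> {1..n}" "j \<in> {1..n}" "j \<notin> S"
  shows "card S < n"
proof -
  have "card S \<le> card ({1..n} - {j})" using assms by (intro card_mono) auto
  then show ?thesis using assms(2) by auto
qed

lemma var_Suc_mult_divdiff_tanisaki_gen:
  assumes conj: "\<forall>k. 1 \<le> k \<longrightarrow> k < n \<longrightarrow> conj_part n mu k \<le> 1"
    and i: "1 \<le> i" "Suc i \<le> n"
    and g: "g \<in> tanisaki_gens n mu"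
  shows "var (Suc i) * divdiff i g \<in> (tanisaki_ideal n mu :: 'a::field mpoly set)"
proof -
  obtain r S where gS: "g = esym r S"
    and S: "S \<subseteq> {1..n}" "1 \<le> card S" "r \<le> card S" "card S < r + dk n mu (card S)"
    using g unfolding tanisaki_gens_def by blast
  have finS: "finite S" using S(1) finite_subset by blast
  let ?I = "tanisaki_ideal n mu :: 'a mpoly set"
  consider "r = 0" | "i \<in> S \<longleftrightarrow> Suc i \<in> S" | "r \<noteq> 0" "i \<in> S" "Suc i \<notin> S"
    | "r \<noteq> 0" "i \<notin> S" "Suc i \<in> S"
    by blast
  then show ?thesis
  proof cases
    case 1
    then have "divdiff i g = 0" using gS finS by (simp add: esym_0 divdiff_symmetric)
    then show ?thesis by (simp add: zero_in_tanisaki_ideal)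
  next
    case 2
    then have "divdiff i g = 0"
      using gS by (simp add: divdiff_symmetric swap_var_esym swap_idx_image_eq)
    then show ?thesis by (simp add: zero_in_tanisaki_ideal)
  next
    case 3
    define A where "A = S - {i}"
    have A: "finite A" "i \<notin> A" "Suc i \<notin> A" and SA: "S = insert i A"
      using 3 finS by (auto simp: A_def)
    have r: "1 \<le> r" using 3 by simp
    have "var (Suc i) * divdiff i g = esym r (insert (Suc i) A) - esym r A"
      unfolding gS SA divdiff_esym_insert[OF A r] esym_insert[OF A(1,3) r] by simp
    moreover have "esym r (insert (Suc i) A) \<in> ?I"
      using S SA A i by (intro esym_in_tanisaki_ideal) auto
    moreover have "esym r A \<in> ?I"
      using esym_Diff_in_tanisaki_ideal[OF conj S] card_less_if_missing[OF S(1), of "Suc i"] 3 i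
      by (simp add: A_def)
    ultimately show ?thesis unfolding tanisaki_ideal_def by (simp add: ideal_in_diff)
  next
    case 4
    define A where "A = S - {Suc i}"
    have A: "finite A" "i \<notin> A" "Suc i \<notin> A" and SA: "S = insert (Suc i) A"
      using 4 finS by (auto simp: A_def)
    have r: "1 \<le> r" using 4 by simp
    have "divdiff i g = - esym (r - 1) A"
      unfolding gS SA by (rule divdiff_esym_insert_Suc[OF A r])
    then have "var (Suc i) * divdiff i g = esym r A - g"
      unfolding gS SA esym_insert[OF A(1,3) r] by simp
    moreover have "g \<in> ?I" using g unfolding tanisaki_ideal_def by (rule ideal_in_gen)
    moreover have "esym r A \<in> ?I"
      using esym_Diff_in_tanisaki_ideal[OF conj S] card_less_if_missing[OF S(1), of i] 4 i
      by (simp add: A_def)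
    ultimately show ?thesis unfolding tanisaki_ideal_def by (simp add: ideal_in_diff)
  qed
qed

lemma demazure_ideal_in:
  assumes i: "1 \<le> i" "Suc i \<le> n"
    and swap: "\<And>g. g \<in> G \<Longrightarrow> swap_var i g \<in> G"
    and gen: "\<And>g. g \<in> G \<Longrightarrow> var (Suc i) * divdiff i g \<in> ideal_in n G"
    and f: "f \<in> ideal_in n (G :: 'a::field mpoly set)"
  shows "demazure i f \<in> ideal_in n G"
proof -
  obtain H c where H: "finite H" "H \<subseteq> G" "\<And>g. g \<in> H \<Longrightarrow> c g \<in> polys_in n"
     "f = (\<Sum>g\<in>H. c g * g)"
    using f unfolding ideal_in_def by blast
  have "var (Suc i) * divdiff i f =
      (\<Sum>g\<in>H. c g * (var (Suc i) * divdiff i g) + (var (Suc i) * divdiff i (c g)) * swap_var i g)"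
    unfolding H(4) divdiff_sum[OF H(1)] sum_distrib_left
    by (rule sum.cong[OF refl]) (simp only: divdiff_mult, simp add: algebra_simps)
  also have "\<dots> \<in> ideal_in n G"
  proof (intro ideal_in_sum ideal_in_add)
    fix g assume g: "g \<in> H"
    show "c g * (var (Suc i) * divdiff i g) \<in> ideal_in n G"
      by (rule ideal_in_mult) (use g H(2,3) gen in auto)
    show "var (Suc i) * divdiff i (c g) * swap_var i g \<in> ideal_in n G"
      using g H(2,3) i swap
      by (intro ideal_in_mult ideal_in_gen polys_in_mult polys_in_var polys_in_divdiff) auto
  qed
  finally show ?thesis using f unfolding demazure_eq_divdiff by (intro ideal_in_add)
qed

lemma swap_var_tanisaki_gen:
  assumes i: "1 \<le> i" "Suc i \<le> n" and g: "g \<in> tanisaki_gens n mu"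
  shows "swap_var i g \<in> (tanisaki_gens n mu :: 'a::comm_ring_1 mpoly set)"
proof -
  obtain r S where gS: "g = esym r S"
    and S: "S \<subseteq> {1..n}" "1 \<le> card S" "r \<le> card S" "card S < r + dk n mu (card S)"
    using g unfolding tanisaki_gens_def by blast
  have "swap_idx i (Suc i) ` S \<subseteq> {1..n}" using S(1) i by (auto simp: swap_idx_def)
  moreover have "card (swap_idx i (Suc i) ` S) = card S"
    by (rule card_image) (rule inj_on_subset[OF inj_swap_idx subset_UNIV])
  ultimately show ?thesis using S unfolding tanisaki_gens_def gS swap_var_esym
    by (intro CollectI exI[of _ r] exI[of _ "swap_idx i (Suc i) ` S"]) simp
qed

lemma hook_demazure_closed:
  assumes "is_partition n mu" "is_hook n mu"
  shows "\<forall>i \<in> {1..<n}. demazure i ` (tanisaki_ideal n mu :: 'a::field mpoly set) \<subseteq> tanisaki_ideal n mu"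
proof
  fix i assume "i \<in> {1..<n}"
  then have i: "1 \<le> i" "Suc i \<le> n" by auto
  note conj = hook_conj_part_le_1[OF assms]
  show "demazure i ` (tanisaki_ideal n mu :: 'a mpoly set) \<subseteq> tanisaki_ideal n mu"
    using var_Suc_mult_divdiff_tanisaki_gen[OF conj i] swap_var_tanisaki_gen[OF i]
    unfolding tanisaki_ideal_def by (auto intro: demazure_ideal_in[OF i])
qed

section \<open>Non-hooks\<close>

lemma nonhook_esym_in_tanisaki_ideal:
  assumes P: "is_partition n mu" and n: "2 \<le> n" and a: "2 \<le> mu ! (n - 2)"
  shows "esym (conj_part n mu n) ({1..n} - {2}) \<in> tanisaki_ideal n mu"
proof (rule esym_in_tanisaki_ideal)
  have "card ({1..n} - {2}) = n - 1" using n by simp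
  then show "card ({1..n} - {2}) < conj_part n mu n + dk n mu (card ({1..n} - {2}))"
    "conj_part n mu n \<le> card ({1..n} - {2})" "1 \<le> card ({1..n} - {2})"
    using dk_pred_conj_part[OF P] nonhook_conj_part_bounds[OF P n a] by auto
qed simp

primrec divdiff_chain :: "nat \<Rightarrow> 'a::field mpoly \<Rightarrow> 'a mpoly" where
  "divdiff_chain 0 p = p"
| "divdiff_chain (Suc j) p = divdiff (j + 3) (divdiff_chain j p)"

text \<open>The generators of \<open>I\<^sub>\<mu>\<close> are killed by \<open>chain_functional l\<close> for three different
  reasons: \<open>e\<^sub>r(x\<^sub>1, \<dots>, x\<^sub>n)\<close> is symmetric and has no constant term, \<open>e\<^sub>r(S)\<close> with \<open>r > l\<close>
  has too high degree, and \<open>e\<^sub>l\<close> of \<open>n - 1\<close> variables is \<open>(-x\<^sub>j)\<^sup>l\<close> modulo symmetric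
  polynomials without constant term.\<close>

definition chain_functional :: "nat \<Rightarrow> 'a::field mpoly \<Rightarrow> 'a" where
  "chain_functional l p = lookup (divdiff 1 (divdiff_chain (l - 1) p)) 0"

lemma divdiff_chain_add: "divdiff_chain j (p + q) = divdiff_chain j p + divdiff_chain j q"
  by (induction j) (simp_all add: divdiff_add)

lemma divdiff_chain_zero: "divdiff_chain j 0 = 0"
  by (induction j) (simp_all add: divdiff_zero)

lemma divdiff_chain_uminus: "divdiff_chain j (- p) = - divdiff_chain j p"
  by (induction j) (simp_all add: divdiff_uminus)

lemma divdiff_chain_mult_symmetric:
  "(\<forall>k. 3 \<le> k \<longrightarrow> k < j + 3 \<longrightarrow> swap_var k g = g) \<Longrightarrow>
    divdiff_chain j (g * c) = g * divdiff_chain j c"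
  by (induction j) (simp_all add: divdiff_mult_symmetric)

lemma divdiff_chain_eq_0: "divdiff 3 p = 0 \<Longrightarrow> 1 \<le> j \<Longrightarrow> divdiff_chain j p = 0"
proof (induction j)
  case (Suc j) then show ?case by (cases j) (simp_all add: divdiff_zero)
qed simp

lemma total_deg_keys_divdiff_chain:
  "(\<forall>m\<in>keys p. d \<le> total_deg m) \<Longrightarrow> \<forall>m\<in>keys (divdiff_chain j p). d \<le> total_deg m + j"
proof (induction j)
  case (Suc j)
  show ?case
  proof
    fix x assume "x \<in> keys (divdiff_chain (Suc j) p)"
    then obtain m where "m \<in> keys (divdiff_chain j p)" "total_deg m = Suc (total_deg x)"
      using keys_divdiff by fastforce
    then show "d \<le> total_deg x + Suc j" using Suc by fastforce
  qed
qed simp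

definition avoids_x12 :: "'a::zero mpoly \<Rightarrow> bool" where
  "avoids_x12 p \<longleftrightarrow> (\<forall>m\<in>keys p. lookup m 1 = 0 \<and> lookup m 2 = 0)"

lemma avoids_x12_divdiff_chain: "avoids_x12 p \<Longrightarrow> avoids_x12 (divdiff_chain j p)"
proof (induction j)
  case (Suc j)
  show ?case unfolding avoids_x12_def
  proof
    fix x assume "x \<in> keys (divdiff_chain (Suc j) p)"
    then obtain m where "m \<in> keys (divdiff_chain j p)"
      "\<forall>k. k \<noteq> j + 3 \<longrightarrow> k \<noteq> Suc (j + 3) \<longrightarrow> lookup x k = lookup m k"
      using keys_divdiff by fastforce
    then show "lookup x 1 = 0 \<and> lookup x 2 = 0" using Suc unfolding avoids_x12_def by auto
  qed
qed simp

lemma swap_var_1_avoids_x12: "avoids_x12 p \<Longrightarrow> swap_var 1 p = (p :: 'a::comm_ring_1 mpoly)"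
proof (rule poly_mapping_eqI)
  fix m assume s: "avoids_x12 p"
  show "lookup (swap_var 1 p) m = lookup p m"
  proof (cases "lookup m 1 = lookup m 2")
    case True
    then have "swap_exps 1 m = m" by (intro swap_exps_fixed) (simp add: numeral_2_eq_2)
    then show ?thesis by (simp add: lookup_swap_var)
  next
    case False
    then have "m \<notin> keys p" using s unfolding avoids_x12_def by auto
    moreover have "swap_exps 1 m \<notin> keys p"
    proof
      assume "swap_exps 1 m \<in> keys p"
      then have "lookup (swap_exps 1 m) 1 = 0 \<and> lookup (swap_exps 1 m) 2 = 0" using s unfolding avoids_x12_def by auto
      then show False using False by (simp add: lookup_swap_exps swap_idx_def numeral_2_eq_2)
    qed
    ultimately show ?thesis by (simp add: lookup_swap_var in_keys_iff)
  qed
qed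

lemma chain_functional_add: "chain_functional l (p + q) = chain_functional l p + chain_functional l q"
  by (simp add: chain_functional_def divdiff_chain_add divdiff_add lookup_add)

lemma chain_functional_uminus: "chain_functional l (- p) = - chain_functional l p"
  by (simp add: chain_functional_def divdiff_chain_uminus divdiff_uminus)

lemma chain_functional_zero: "chain_functional l 0 = 0"
  by (simp add: chain_functional_def divdiff_chain_zero divdiff_zero)

lemma chain_functional_sum: "finite A \<Longrightarrow> chain_functional l (sum F A) = (\<Sum>x\<in>A. chain_functional l (F x))"
  by (induction A rule: finite_induct) (simp_all add: chain_functional_zero chain_functional_add)

lemma chain_functional_total_deg:
  assumes "1 \<le> l" "\<forall>m\<in>keys p. l + 1 \<le> total_deg m"
  shows "chain_functional l p = 0"
proof -
  have A: "\<forall>m\<in>keys (divdiff_chain (l - 1) p). l + 1 \<le> total_deg m + (l - 1)"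
    by (rule total_deg_keys_divdiff_chain) (use assms in auto)
  have "0 \<notin> keys (divdiff 1 (divdiff_chain (l - 1) p))"
  proof
    assume "0 \<in> keys (divdiff 1 (divdiff_chain (l - 1) p))"
    then obtain m where "m \<in> keys (divdiff_chain (l - 1) p)" "total_deg m = Suc (total_deg 0)"
      using keys_divdiff by blast
    then show False using A assms(1) by fastforce
  qed
  then show ?thesis by (simp add: chain_functional_def in_keys_iff)
qed

lemma chain_functional_symmetric_mult:
  assumes "swap_var 1 g = g" "\<forall>k. 3 \<le> k \<longrightarrow> k \<le> l + 1 \<longrightarrow> swap_var k g = g" "lookup g 0 = 0" "1 \<le> l"
  shows "chain_functional l (g * c) = (0 :: 'a::field)"
proof -
  have "divdiff_chain (l - 1) (g * c) = g * divdiff_chain (l - 1) c"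
    by (rule divdiff_chain_mult_symmetric) (use assms(2,4) in auto)
  then have "divdiff 1 (divdiff_chain (l - 1) (g * c)) = g * divdiff 1 (divdiff_chain (l - 1) c)"
    using assms(1) by (simp add: divdiff_mult_symmetric)
  then show ?thesis by (simp add: chain_functional_def lookup_mult_0[OF assms(3)])
qed

lemma chain_functional_scalar: "chain_functional l (single 0 a * p) = a * chain_functional l (p :: 'a::field mpoly)"
proof -
  have "divdiff_chain (l - 1) (single 0 a * p) = single 0 a * divdiff_chain (l - 1) p"
    by (rule divdiff_chain_mult_symmetric) (simp add: swap_var_single_0)
  then show ?thesis by (simp add: chain_functional_def divdiff_mult_symmetric swap_var_single_0 lookup_single_0_mult)
qed

lemma chain_functional_esym_high_degree:
  assumes "finite S" "l + 1 \<le> r" "1 \<le> l"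
  shows "chain_functional l (c * esym r S) = (0 :: 'a::field)"
  by (rule chain_functional_total_deg[OF assms(3)])
    (rule total_deg_keys_mult, use total_deg_keys_esym[OF assms(1)] assms(2) in auto)

lemma chain_functional_esym_full:
  assumes "1 \<le> r" "1 \<le> l" "l + 2 \<le> n"
  shows "chain_functional l (c * esym r {1..n}) = (0 :: 'a::field)"
proof -
  have s1: "swap_var 1 (esym r {1..n}) = (esym r {1..n} :: 'a mpoly)"
    by (rule swap_var_esym_full) (use assms in auto)
  have s2: "\<forall>k. 3 \<le> k \<longrightarrow> k \<le> l + 1 \<longrightarrow> swap_var k (esym r {1..n}) = (esym r {1..n} :: 'a mpoly)"
    by (intro allI impI swap_var_esym_full) (use assms in auto)
  have s3: "lookup (esym r {1..n} :: 'a mpoly) 0 = 0" by (rule lookup_esym_0) (use assms in auto)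
  have "chain_functional l (esym r {1..n} * c) = 0"
    by (rule chain_functional_symmetric_mult[OF s1 s2 s3 assms(2)])
  then show ?thesis by (simp add: mult.commute)
qed

lemma chain_functional_var_power:
  assumes "2 \<le> l" "1 \<le> j"
  shows "chain_functional l (var j ^ l) = (0::'a::field)"
proof (cases "j = 3 \<or> j = 4")
  case False
  then have "swap_var 3 (var j ^ l) = (var j ^ l :: 'a mpoly)"
    by (simp add: swap_var_power swap_var_var swap_idx_def)
  then have "divdiff 3 (var j ^ l :: 'a mpoly) = 0" by (rule divdiff_symmetric)
  then have "divdiff_chain (l - 1) (var j ^ l :: 'a mpoly) = 0" using assms by (intro divdiff_chain_eq_0) auto
  then show ?thesis by (simp add: chain_functional_def divdiff_zero)
next
  case True
  have "avoids_x12 (var j ^ l :: 'a mpoly)"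
    unfolding avoids_x12_def using keys_var_power[of j l] True by (auto simp: lookup_single)
  then have "avoids_x12 (divdiff_chain (l - 1) (var j ^ l :: 'a mpoly))" by (rule avoids_x12_divdiff_chain)
  then have "divdiff 1 (divdiff_chain (l - 1) (var j ^ l :: 'a mpoly)) = 0" by (intro divdiff_symmetric swap_var_1_avoids_x12)
  then show ?thesis by (simp add: chain_functional_def)
qed

lemma chain_functional_mult_var_power:
  assumes "2 \<le> l" "1 \<le> j"
  shows "chain_functional l (c * var j ^ l) = (0::'a::field)"
proof -
  define c' where "c' = c - single 0 (lookup c 0)"
  have c: "c = single 0 (lookup c 0) + c'" by (simp add: c'_def)
  have "\<forall>m\<in>keys c'. 1 \<le> total_deg m"
  proof
    fix m assume "m \<in> keys c'"
    moreover have "lookup c' 0 = 0" by (simp add: c'_def lookup_minus)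
    ultimately have "m \<noteq> 0" by (auto simp: in_keys_iff)
    then show "1 \<le> total_deg m" by (rule total_deg_pos)
  qed
  moreover have "\<forall>m\<in>keys (var j ^ l :: 'a mpoly). total_deg m = l"
    using keys_var_power[of j l] by (auto simp: total_deg_single)
  ultimately have "\<forall>m\<in>keys (c' * var j ^ l). l + 1 \<le> total_deg m"
  proof -
    assume A: "\<forall>m\<in>keys c'. 1 \<le> total_deg m" and B: "\<forall>m\<in>keys (var j ^ l :: 'a mpoly). total_deg m = l"
    show ?thesis
    proof
      fix m assume "m \<in> keys (c' * var j ^ l)"
      then have "m \<in> {a + b | a b. a \<in> keys c' \<and> b \<in> keys (var j ^ l :: 'a mpoly)}"
        by (rule subsetD[OF keys_mult])
      then obtain a b where "m = a + b" "a \<in> keys c'" "b \<in> keys (var j ^ l :: 'a mpoly)" by blast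
      then show "l + 1 \<le> total_deg m" using A B by (fastforce simp: total_deg_add)
    qed
  qed
  then have "chain_functional l (c' * var j ^ l) = 0" using assms by (intro chain_functional_total_deg) auto
  moreover have "chain_functional l (single 0 (lookup c 0) * var j ^ l) = 0"
    by (simp only: chain_functional_scalar chain_functional_var_power[OF assms] mult_zero_right)
  ultimately show ?thesis by (subst c) (simp add: distrib_right chain_functional_add)
qed

lemma chain_functional_mult_minus_var_power:
  assumes "2 \<le> l" "1 \<le> j"
  shows "chain_functional l (c * (- var j) ^ l) = (0::'a::field)"
proof (cases "even l")
  case True then show ?thesis using chain_functional_mult_var_power[OF assms] by (simp add: power_minus_even)
next
  case False then show ?thesis using chain_functional_mult_var_power[OF assms, of c] by (simp add: power_minus_odd chain_functional_uminus)
qed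

lemma chain_functional_esym_Diff:
  assumes "2 \<le> l" "l + 2 \<le> n" "j \<in> {1..n}"
  shows "chain_functional l (c * esym l ({1..n} - {j})) = (0::'a::field)"
proof -
  have ins: "insert j ({1..n} - {j}) = {1..n}" "insert j {1..n} = {1..n}" using assms by auto
  have "c * esym l ({1..n} - {j}) = (\<Sum>t\<le>l. (c * (- var j) ^ t) * esym (l - t) {1..n})"
  proof -
    have e: "esym l ({1..n} - {j}) = (\<Sum>t\<le>l. (- var j) ^ t * esym (l - t) {1..n} :: 'a mpoly)"
      using esym_eq_sum_insert[of "{1..n} - {j}" j l, unfolded ins(1)] by simp
    show ?thesis unfolding e by (simp add: sum_distrib_left mult.assoc)
  qed
  then have "chain_functional l (c * esym l ({1..n} - {j})) =
      (\<Sum>t\<le>l. chain_functional l ((c * (- var j) ^ t) * esym (l - t) {1..n}))"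
    by (simp add: chain_functional_sum)
  also have "\<dots> = (\<Sum>t\<le>l. if t = l then chain_functional l (c * (- var j) ^ l) else 0)"
  proof (rule sum.cong[OF refl])
    fix t assume t: "t \<in> {..l}"
    show "chain_functional l ((c * (- var j) ^ t) * esym (l - t) {1..n}) =
        (if t = l then chain_functional l (c * (- var j) ^ l) else 0)"
    proof (cases "t = l")
      case True then show ?thesis by (simp add: esym_0)
    next
      case False then show ?thesis using t assms by (intro trans[OF chain_functional_esym_full]) auto
    qed
  qed
  also have "\<dots> = chain_functional l (c * (- var j) ^ l)" by simp
  also have "\<dots> = 0" by (rule chain_functional_mult_minus_var_power) (use assms in auto)
  finally show ?thesis .
qed

lemma divdiff_chain_prod_var:
  assumes "finite U" "3 \<notin> U"
  shows "divdiff_chain j (\<Prod>k\<in>U. var k) = (if {4..j+3} \<subseteq> U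
    then (- 1) ^ j * (\<Prod>k\<in>U - {4..j+3}. var k) else (0 :: 'a::field mpoly))"
proof (induction j)
  case (Suc j)
  let ?V = "U - {4..j+3}"
  have V: "finite ?V" "j + 3 \<notin> ?V" using assms by (cases j; auto)+
  have I: "{4..Suc j + 3} = insert (Suc (j + 3)) {4..j+3}" by auto
  have "?V - {Suc (j + 3)} = U - {4..Suc j + 3}" by auto
  moreover have "{4..Suc j + 3} \<subseteq> U \<longleftrightarrow> {4..j+3} \<subseteq> U \<and> Suc (j + 3) \<in> ?V"
    unfolding I by auto
  ultimately show ?case using Suc.IH
    by (simp add: divdiff_zero divdiff_mult_symmetric swap_var_minus_one_power divdiff_prod_var[OF V])
qed simp

lemma chain_functional_prod_var:
  assumes l: "2 \<le> l" "l + 2 \<le> n" and U: "U \<subseteq> {1..n} - {2,3}" "card U = l"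
  shows "chain_functional l (\<Prod>k\<in>U. var k) = (if U = insert 1 {4..l+2} then (- 1) ^ (l - 1) else (0::'a::field))"
proof -
  have fU: "finite U" using U(1) finite_subset by blast
  have e: "l - 1 + 3 = l + 2" using l by simp
  have ph: "divdiff_chain (l - 1) (\<Prod>k\<in>U. var k) = (if {4..l+2} \<subseteq> U
      then (- 1) ^ (l - 1) * (\<Prod>k\<in>U - {4..l+2}. var k) else (0 :: 'a mpoly))"
  proof -
    have n3: "3 \<notin> U" using U(1) by auto
    show ?thesis using divdiff_chain_prod_var[OF fU n3, of "l - 1"] unfolding e by simp
  qed
  show ?thesis
  proof (cases "{4..l+2} \<subseteq> U")
    case False
    then have "U \<noteq> insert 1 {4..l+2}" by auto
    then show ?thesis using False ph by (simp add: chain_functional_def divdiff_zero)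
  next
    case True
    have cW: "card (U - {4..l+2}) = 1" using True U(2) l by (simp add: card_Diff_subset fU)
    then obtain u where W: "U - {4..l+2} = {u}" by (rule card_1_singletonE)
    have u: "u \<in> U" "u \<notin> {4..l+2}" using W by auto
    have UW: "U = insert u {4..l+2}" using W True by auto
    have d: "divdiff 1 (divdiff_chain (l - 1) (\<Prod>k\<in>U. var k)) = (- 1) ^ (l - 1) * divdiff 1 (var u :: 'a mpoly)"
      using True ph W by (simp add: divdiff_mult_symmetric swap_var_minus_one_power)
    show ?thesis
    proof (cases "u = 1")
      case True
      then show ?thesis using d UW by (simp add: chain_functional_def divdiff_var lookup_minus_one_power)
    next
      case False
      have "u \<noteq> 2" "u \<noteq> 1" using u(1) U(1) False by auto
      then have "swap_var 1 (var u) = (var u :: 'a mpoly)" by (simp add: swap_var_var swap_idx_def)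
      then have "divdiff 1 (var u :: 'a mpoly) = 0" by (rule divdiff_symmetric)
      moreover have "U \<noteq> insert 1 {4..l+2}"
      proof
        assume "U = insert 1 {4..l+2}"
        then have "U - {4..l+2} = {1}" by auto
        then show False using W False by auto
      qed
      ultimately show ?thesis using d by (simp add: chain_functional_def)
    qed
  qed
qed

lemma chain_functional_esym_witness:
  assumes l: "2 \<le> l" "l + 2 \<le> n"
  shows "chain_functional l (esym l ({1..n} - {2,3})) = ((- 1) ^ (l - 1) :: 'a::field)"
proof -
  let ?T = "{1..n} - {2,3}"
  let ?X = "{U. U \<subseteq> ?T \<and> card U = l}"
  let ?U0 = "insert 1 {4..l+2}"
  have fX: "finite ?X" by (rule finite_subset[of _ "Pow ?T"]) auto
  have U0X: "?U0 \<in> ?X"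
  proof -
    have "?U0 \<subseteq> ?T" using l by auto
    moreover have "card ?U0 = l" using l by simp
    ultimately show ?thesis by blast
  qed
  have "chain_functional l (esym l ?T :: 'a mpoly) = (\<Sum>U\<in>?X. chain_functional l (\<Prod>k\<in>U. var k :: 'a mpoly))"
    unfolding esym_def by (rule chain_functional_sum[OF fX])
  also have "\<dots> = (\<Sum>U\<in>?X. if U = ?U0 then (- 1) ^ (l - 1) else 0)"
  proof (rule sum.cong[OF refl])
    fix U assume "U \<in> ?X"
    then have "U \<subseteq> ?T" "card U = l" by auto
    then show "chain_functional l (\<Prod>k\<in>U. var k :: 'a mpoly) = (if U = ?U0 then (- 1) ^ (l - 1) else 0)"
      by (rule chain_functional_prod_var[OF l])
  qed
  also have "\<dots> = (- 1) ^ (l - 1)" using fX U0X by simp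
  finally show ?thesis .
qed

lemma chain_functional_tanisaki_ideal:
  assumes P: "is_partition n mu" and n: "2 \<le> n" and a: "2 \<le> mu ! (n - 2)"
    and f: "f \<in> (tanisaki_ideal n mu :: 'a::field mpoly set)"
  shows "chain_functional (conj_part n mu n) f = 0"
proof -
  define l where "l = conj_part n mu n"
  have l: "2 \<le> l" "l + 2 \<le> n" using nonhook_conj_part_bounds[OF P n a] by (auto simp: l_def)
  obtain H c where H: "finite H" "H \<subseteq> tanisaki_gens n mu" "f = (\<Sum>g\<in>H. c g * g)"
    using f unfolding tanisaki_ideal_def ideal_in_def by blast
  have "chain_functional l (c g * g) = 0" if g: "g \<in> H" for g
  proof -
    obtain r S where gS: "g = esym r S"
      and S: "S \<subseteq> {1..n}" "1 \<le> card S" "r \<le> card S" "card S < r + dk n mu (card S)"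
      using g H(2) unfolding tanisaki_gens_def by blast
    have fS: "finite S" using S(1) finite_subset by blast
    from nonhook_tanisaki_gen_cases[OF P n a S, folded l_def]
    consider "S = {1..n}" "1 \<le> r" | "card S = n - 1" "r = l" | "l + 1 \<le> r" by blast
    then show ?thesis
    proof cases
      case 1 then show ?thesis using gS l chain_functional_esym_full[of r l n "c g"] by simp
    next
      case 2
      have "S \<noteq> {1..n}" using 2 l by auto
      then obtain j where j: "j \<in> {1..n}" "j \<notin> S" using S(1) by blast
      have "S \<subseteq> {1..n} - {j}" using S(1) j by auto
      moreover have "card ({1..n} - {j}) = card S" using 2 j by simp
      ultimately have "S = {1..n} - {j}" by (intro card_subset_eq) auto
      then show ?thesis using gS 2 l j chain_functional_esym_Diff[of l n j "c g"] by simp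
    next
      case 3 then show ?thesis using gS fS l chain_functional_esym_high_degree[of S l r "c g"] by simp
    qed
  qed
  then show ?thesis using H by (simp add: chain_functional_sum l_def)
qed

lemma demazure_esym_witness:
  assumes "4 \<le> n" "1 \<le> l"
  shows "demazure 2 (esym l ({1..n} - {2})) = (esym l ({1..n} - {2, 3}) :: 'a::field mpoly)"
proof -
  let ?A = "{1..n} - {2, 3}"
  have A: "finite ?A" "2 \<notin> ?A" "Suc 2 \<notin> ?A" by auto
  have S: "{1..n} - {2} = insert (Suc 2) ?A" using assms by auto
  show ?thesis
    unfolding S demazure_eq_divdiff divdiff_esym_insert_Suc[OF A assms(2)]
    unfolding esym_insert[OF A(1,3) assms(2)] by simp
qed

lemma nonhook_not_demazure_closed:
  assumes P: "is_partition n mu" and n: "2 \<le> n" and a: "2 \<le> mu ! (n - 2)"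
  shows "\<not> (\<forall>i \<in> {1..<n}. demazure i ` (tanisaki_ideal n mu :: 'a::field mpoly set)
              \<subseteq> tanisaki_ideal n mu)"
proof
  assume closed: "\<forall>i \<in> {1..<n}. demazure i ` (tanisaki_ideal n mu :: 'a mpoly set)
              \<subseteq> tanisaki_ideal n mu"
  define l where "l = conj_part n mu n"
  have l: "2 \<le> l" "l + 2 \<le> n" using nonhook_conj_part_bounds[OF P n a] by (auto simp: l_def)
  have "esym l ({1..n} - {2}) \<in> (tanisaki_ideal n mu :: 'a mpoly set)"
    using nonhook_esym_in_tanisaki_ideal[OF P n a] by (simp add: l_def)
  moreover have "(2::nat) \<in> {1..<n}" using l by simp
  ultimately have "demazure 2 (esym l ({1..n} - {2})) \<in> (tanisaki_ideal n mu :: 'a mpoly set)"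
    using closed by blast
  moreover have "demazure 2 (esym l ({1..n} - {2})) = (esym l ({1..n} - {2, 3}) :: 'a mpoly)"
    by (rule demazure_esym_witness) (use l in auto)
  ultimately have "esym l ({1..n} - {2, 3}) \<in> (tanisaki_ideal n mu :: 'a mpoly set)"
    by simp
  then have "chain_functional l (esym l ({1..n} - {2, 3}) :: 'a mpoly) = 0"
    using chain_functional_tanisaki_ideal[OF P n a] by (simp add: l_def)
  then show False using chain_functional_esym_witness[OF l, where 'a='a] by simp
qed

theorem proposition8p2:
  fixes n :: nat and mu :: "nat list"
  assumes "1 \<le> n" and "is_partition n mu"
  shows "(\<forall>i \<in> {1..<n}. demazure i ` (tanisaki_ideal n mu :: 'a::field mpoly set)
              \<subseteq> tanisaki_ideal n mu) \<longleftrightarrow> is_hook n mu"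
  using hook_demazure_closed[OF assms(2)] nonhook_not_demazure_closed[OF assms(2)]
    not_hook_second_largest_part[OF assms(2,1)]
  by blast

end
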